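(* Let $\mathbb{X},\mathbb{Y}$ be finite-dimensional real Hilbert spaces, $f:\mathbb{X}\to(-\infty,\infty]$ and $g:\mathbb{Y}\to(-\infty,\infty]$ proper, convex and lower semicontinuous, $K:\mathbb{X}\to\mathbb{Y}$ linear, and $h:\mathbb{X}\to\mathbb{R}$ convex and differentiable with $\bar L$-Lipschitz gradient. Assume (A1) below holds. Let $\{(z_n,x_n,w_n,y_n,\tau_n)\}$ be generated by the P-GRPDA algorithm described in the context. Then $\{(x_n,y_n)\}$ converges to a saddle point of $\mathbb{L}(x,y):=f(x)+h(x)+\langle Kx,y\rangle-g^*(y)$, i.e., to some $(\hat x,\hat y)$ with $\mathbb{L}(\hat x,y)\le\mathbb{L}(\hat x,\hat y)\le\mathbb{L}(x,\hat y)$ for all $(x,y)\in\mathbb{X}\times\mathbb{Y}$.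
   Context: $\phi=\frac{1+\sqrt5}{2}$; $K^*$ adjoint of $K$; $g^*$ Fenchel conjugate of $g$; $\operatorname{prox}_{\lambda f}(x)=\arg\min_{u}\{f(u)+\frac{1}{2\lambda}\|u-x\|^2\}$. (A1): the saddle point problem $\min_{x}\max_{y}\mathbb{L}(x,y)$ has a nonempty solution set, and $0\in\operatorname{ri}(K(\operatorname{dom}f)-\operatorname{dom}g)$ (ri = relative interior). (The paper also assumes the proximal maps of $f,g$ are efficiently computable.) P-GRPDA: choose $x_0\in\mathbb{X}$, $y_0\in\mathbb{Y}$, set $z_0=x_0$, choose $\beta>0$, $\psi\in(1,\phi]$, $0<2\mu'<\mu<\psi/2$, $\tau_0>0$. For $n=1,2,\dots$: $z_n=\frac{\psi-1}{\psi}x_{n-1}+\frac1\psi z_{n-1}$; $x_n=\operatorname{prox}_{\tau_{n-1}f}\big(z_n-\tau_{n-1}K^*y_{n-1}-\tau_{n-1}\nabla h(x_{n-1})\big)$; $\tau_n=\min\left\{\tau_{n-1},\ \frac{\mu\|x_n-x_{n-1}\|}{\sqrt\beta\|Kx_n-Kx_{n-1}\|},\ \frac{\mu'\|x_n-x_{n-1}\|}{\|\nabla h(x_n)-\nabla h(x_{n-1})\|}\right\}$, $\sigma_n=\beta\tau_n$; $w_n=\operatorname{prox}_{\frac{1}{\sigma_n}g}\big(\frac{y_{n-1}}{\sigma_n}+Kx_n\big)$; $y_n=y_{n-1}+\sigma_n(Kx_n-w_n)$. Conventions in the $\tau_n$ update: $1/0=\infty$ (a term with zero denominator and nonzero numerator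 is ignored) and $0/0=\infty$ (so $\tau_n=\tau_{n-1}$ if $x_n=x_{n-1}$). *)

theory Defs
  imports "HOL-Analysis.Analysis"
begin

text \<open>Extended-real valued functions \<open>f : X \<rightarrow> (-\<infinity>, \<infinity>]\<close> are modelled as maps into ereal
  that never take the value \<open>-\<infinity>\<close> (part of properness).\<close>

definition edom :: "('a \<Rightarrow> ereal) \<Rightarrow> 'a set" where
  "edom f = {x. f x < \<infinity>}"

definition proper_fun :: "('a \<Rightarrow> ereal) \<Rightarrow> bool" where
  "proper_fun f \<longleftrightarrow> (\<forall>x. f x \<noteq> -\<infinity>) \<and> (\<exists>x. f x < \<infinity>)"

definition convex_efun :: "('a::real_vector \<Rightarrow> ereal) \<Rightarrow> bool" where
  "convex_efun f \<longleftrightarrow> convex {(x, r::real). f x \<le> ereal r}"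

definition lsc_efun :: "('a::topological_space \<Rightarrow> ereal) \<Rightarrow> bool" where
  "lsc_efun f \<longleftrightarrow> (\<forall>x. f x \<le> Liminf (at x) f)"

definition fconj :: "('a::real_inner \<Rightarrow> ereal) \<Rightarrow> 'a \<Rightarrow> ereal" where
  "fconj g y = (SUP w. ereal (y \<bullet> w) - g w)"

definition prox :: "real \<Rightarrow> ('a::real_normed_vector \<Rightarrow> ereal) \<Rightarrow> 'a \<Rightarrow> 'a" where
  "prox lam f x = (SOME u. \<forall>v. f u + ereal (norm (u - x)^2 / (2 * lam))
                                \<le> f v + ereal (norm (v - x)^2 / (2 * lam)))"

definition lagr :: "('a \<Rightarrow> ereal) \<Rightarrow> ('a \<Rightarrow> real) \<Rightarrow> ('a \<Rightarrow> 'b::real_inner)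
                    \<Rightarrow> ('b \<Rightarrow> ereal) \<Rightarrow> 'a \<Rightarrow> 'b \<Rightarrow> ereal" where
  "lagr f h K g x y = f x + ereal (h x + K x \<bullet> y) - fconj g y"

definition saddle_point :: "('a \<Rightarrow> ereal) \<Rightarrow> ('a \<Rightarrow> real) \<Rightarrow> ('a \<Rightarrow> 'b::real_inner)
                    \<Rightarrow> ('b \<Rightarrow> ereal) \<Rightarrow> 'a \<Rightarrow> 'b \<Rightarrow> bool" where
  "saddle_point f h K g xh yh \<longleftrightarrow>
     (\<forall>x y. lagr f h K g xh y \<le> lagr f h K g xh yh \<and> lagr f h K g xh yh \<le> lagr f h K g x yh)"

definition golden :: real where "golden = (1 + sqrt 5) / 2"

end

theory Submission
  imports Defs
begin

text \<open>
  For a saddle point \<open>(a, b)\<close> consider the energy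
  \<open>\<psi>/(\<psi> - 1) \<parallel>z\<^sub>n\<^sub>+\<^sub>2 - a\<parallel>\<^sup>2 + \<parallel>y\<^sub>n - b\<parallel>\<^sup>2/\<beta> + \<mu>' \<parallel>x\<^sub>n\<^sub>+\<^sub>1 - x\<^sub>n\<parallel>\<^sup>2\<close>.
  Adding the variational inequalities of the two proximal steps, the saddle point inequalities and
  the gradient inequality of \<open>h\<close>, and rewriting the inner products with the identity for the convex
  combination defining \<open>z\<close>, shows that the energy decreases at every step by
  \<open>c\<^sub>1 \<parallel>x\<^sub>n\<^sub>+\<^sub>2 - x\<^sub>n\<^sub>+\<^sub>1\<parallel>\<^sup>2 + c\<^sub>2 \<parallel>y\<^sub>n\<^sub>+\<^sub>1 - y\<^sub>n\<parallel>\<^sup>2 + c\<^sub>3 \<parallel>z\<^sub>n\<^sub>+\<^sub>2 - x\<^sub>n\<^sub>+\<^sub>1\<parallel>\<^sup>2\<close>;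
  the cross terms with \<open>K\<close> and \<open>\<nabla>h\<close> are absorbed thanks to the step-size rule, and
  \<open>\<psi>\<^sup>2 \<le> \<psi> + 1\<close> disposes of the remaining term. Since \<open>K\<close> is bounded and \<open>\<nabla>h\<close> Lipschitz,
  the step sizes decrease to a positive limit, so the coefficients \<open>c\<^sub>i\<close> are eventually bounded
  away from zero. Hence the iterates are bounded and the residuals vanish. By lower semicontinuity of
  \<open>f\<close> and \<open>g\<^sup>*\<close>, every cluster point of \<open>(x\<^sub>n, y\<^sub>n)\<close> is a saddle point; the energy centred
  at such a cluster point converges and has a subsequence tending to zero, so it tends to zero, and
  the whole sequence converges.
\<close>

section \<open>Convex extended-real functions and proximal maps\<close>

lemma lsc_efun_sequentially:
  fixes f :: "'a::first_countable_topology \<Rightarrow> ereal"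
  assumes "lsc_efun f" "X \<longlonglongrightarrow> x" "eventually (\<lambda>k. f (X k) \<le> ereal (B k)) sequentially"
    "B \<longlonglongrightarrow> b"
  shows "f x \<le> ereal b"
proof (rule ccontr)
  assume "\<not> f x \<le> ereal b"
  then obtain c where c: "ereal b < ereal c" "ereal c < f x"
    using ereal_dense2 by (metis not_le)
  have "ereal c < Liminf (at x) f"
    using c(2) assms(1) unfolding lsc_efun_def using order_less_le_trans by blast
  hence "eventually (\<lambda>u. f u > ereal c) (at x)" by (rule less_LiminfD)
  hence "eventually (\<lambda>u. f u > ereal c) (nhds x)"
    using c(2) unfolding eventually_at_filter by (auto elim: eventually_mono)
  hence "eventually (\<lambda>k. f (X k) > ereal c) sequentially"
    using eventually_compose_filterlim assms(2) by blast
  moreover have "eventually (\<lambda>k. B k < c) sequentially"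
    using c(1) assms(4) order_tendstoD(2) by simp
  ultimately have "eventually (\<lambda>k. False) sequentially"
    using assms(3) by eventually_elim (use order_less_le_trans in fastforce)
  thus False by simp
qed

lemma convex_efunD:
  assumes "convex_efun f" "f u \<le> ereal a" "f v \<le> ereal b" "0 \<le> t" "t \<le> 1"
  shows "f ((1 - t) *\<^sub>R u + t *\<^sub>R v) \<le> ereal ((1 - t) * a + t * b)"
proof -
  let ?S = "{(x, r::real). f x \<le> ereal r}"
  have "(u, a) \<in> ?S" "(v, b) \<in> ?S" using assms by auto
  hence "(1 - t) *\<^sub>R (u, a) + t *\<^sub>R (v, b) \<in> ?S"
    using assms(1,4,5) unfolding convex_efun_def convex_def by (metis diff_add_cancel diff_ge_0_iff_ge)
  thus ?thesis by simp
qed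

lemma lsc_efun_bounded_below_compact:
  fixes f :: "'a::metric_space \<Rightarrow> ereal"
  assumes lsc: "lsc_efun f" and nm: "\<forall>x. f x \<noteq> -\<infinity>" and S: "compact S"
  shows "\<exists>m. \<forall>u\<in>S. ereal m \<le> f u"
proof (rule ccontr)
  assume "\<not> ?thesis"
  hence "\<forall>k::nat. \<exists>u\<in>S. f u < ereal (- real k)" by (meson not_le)
  then obtain U where U: "\<And>k. U k \<in> S" "\<And>k. f (U k) < ereal (- real k)" by metis
  obtain l r where r: "strict_mono r" "(U \<circ> r) \<longlonglongrightarrow> l"
    using seq_compactE[OF compact_imp_seq_compact[OF S]] U(1) by metis
  have bnd: "f l \<le> ereal (- real M)" for M
  proof (rule lsc_efun_sequentially[OF lsc r(2) _ tendsto_const])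
    show "\<forall>\<^sub>F k in sequentially. f ((U \<circ> r) k) \<le> ereal (- real M)"
      unfolding eventually_sequentially
    proof (intro exI allI impI)
      fix k assume "M \<le> k"
      hence "ereal (- real (r k)) \<le> ereal (- real M)" using seq_suble[OF r(1), of k] by simp
      thus "f ((U \<circ> r) k) \<le> ereal (- real M)" unfolding comp_def using U(2)[of "r k"] by (meson less_imp_le order_trans)
    qed
  qed
  from bnd[of 0] nm obtain a where a: "f l = ereal a" by (cases "f l") auto
  obtain M :: nat where "- a < real M" using reals_Archimedean2 by blast
  with bnd[of M] a show False by simp
qed

text \<open>Convexity spreads the lower bound on the unit ball around a finite point to a cone.\<close>

lemma convex_efun_cone_minorant:
  fixes f :: "'a::euclidean_space \<Rightarrow> ereal"
  assumes cv: "convex_efun f" and lsc: "lsc_efun f" and nm: "\<forall>x. f x \<noteq> -\<infinity>"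
    and u0: "f u0 = ereal c"
  shows "\<exists>m k. k \<ge> 0 \<and> (\<forall>u. ereal (m - k * norm (u - u0)) \<le> f u)"
proof -
  obtain m where m: "\<forall>u\<in>cball u0 1. ereal m \<le> f u"
    using lsc_efun_bounded_below_compact[OF lsc nm compact_cball] by blast
  have mc: "m \<le> c" using m u0 by (metis centre_in_cball ereal_less_eq(3) zero_le_one)
  have "ereal (m - (c - m) * norm (u - u0)) \<le> f u" for u
  proof (cases "norm (u - u0) \<le> 1")
    case True
    hence "ereal m \<le> f u" using m by (simp add: dist_norm norm_minus_commute)
    moreover have "m - (c - m) * norm (u - u0) \<le> m" using mc by simp
    ultimately show ?thesis by (meson ereal_less_eq(3) order_trans)
  next
    case False
    define d where "d = norm (u - u0)"
    have d1: "d > 1" using False d_def by simp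
    show ?thesis
    proof (cases "f u")
      case (real a)
      define t where "t = 1 / d"
      have t: "0 \<le> t" "t \<le> 1" using d1 t_def by auto
      define p where "p = (1 - t) *\<^sub>R u0 + t *\<^sub>R u"
      have "p - u0 = t *\<^sub>R (u - u0)" unfolding p_def by (simp add: algebra_simps)
      moreover have "u \<noteq> u0" using d1 d_def by auto
      ultimately have "norm (p - u0) = 1" using d1 t_def d_def by (simp add: divide_simps)
      hence "ereal m \<le> f p" using m by (simp add: dist_norm norm_minus_commute)
      also have "f p \<le> ereal ((1 - t) * c + t * a)"
        unfolding p_def using convex_efunD[OF cv _ _ t] u0 real by simp
      finally have "m \<le> (1 - t) * c + t * a" by simp
      hence "d * m \<le> (d - 1) * c + a" using d1 t_def by (simp add: field_simps)
      hence "m - (c - m) * d \<le> a" using mc by (simp add: algebra_simps)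
      thus ?thesis using real d_def by simp
    qed (use nm in auto)
  qed
  thus ?thesis using mc by (intro exI[of _ m] exI[of _ "c - m"]) auto
qed

lemma prox_objective_coercive:
  fixes f :: "'a::euclidean_space \<Rightarrow> ereal"
  assumes pr: "proper_fun f" and cv: "convex_efun f" and lsc: "lsc_efun f" and lam: "lam > 0"
  shows "\<exists>C. \<forall>v. ereal (C + norm (v - x)^2 / (4*lam)) \<le> f v + ereal (norm (v - x)^2 / (2*lam))"
proof -
  have nm: "\<forall>x. f x \<noteq> -\<infinity>" using pr unfolding proper_fun_def by auto
  obtain u0 where "f u0 < \<infinity>" using pr unfolding proper_fun_def by auto
  then obtain c0 where "f u0 = ereal c0" using nm by (cases "f u0") auto
  then obtain m k where k: "k \<ge> 0" and mk: "\<forall>u. ereal (m - k * norm (u - u0)) \<le> f u"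
    using convex_efun_cone_minorant[OF cv lsc nm] by blast
  define C where "C = m - k * norm (x - u0) - k^2 * lam"
  have "ereal (C + norm (v - x)^2 / (4*lam)) \<le> f v + ereal (norm (v - x)^2 / (2*lam))" for v
  proof -
    have "norm (v - u0) \<le> norm (v - x) + norm (x - u0)"
      using norm_triangle_ineq[of "v - x" "x - u0"] by simp
    hence "k * norm (v - u0) \<le> k * norm (v - x) + k * norm (x - u0)"
      using k by (metis distrib_left mult_left_mono)
    moreover have "k * norm (v - x) \<le> norm (v - x)^2 / (4*lam) + k^2 * lam"
    proof -
      have "0 \<le> (norm (v - x) - 2*k*lam)^2 / (4*lam)" using lam by simp
      thus ?thesis using lam by (simp add: field_simps power2_eq_square)
    qed
    ultimately have "C + norm (v - x)^2 / (4*lam) \<le> m - k * norm (v - u0) + norm (v - x)^2 / (2*lam)"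
      unfolding C_def by (simp add: field_simps)
    hence "ereal (C + norm (v - x)^2 / (4*lam))
        \<le> ereal (m - k * norm (v - u0)) + ereal (norm (v - x)^2 / (2*lam))" by simp
    also have "\<dots> \<le> f v + ereal (norm (v - x)^2 / (2*lam))" using mk by (intro add_right_mono) auto
    finally show ?thesis .
  qed
  thus ?thesis by blast
qed

lemma bounded_range_if_norm_power2_le:
  fixes v :: "'b \<Rightarrow> 'a::real_normed_vector"
  assumes "\<And>m. norm (v m)^2 \<le> C"
  shows "bounded (range v)"
  using assms by (auto intro!: boundedI[where B = "sqrt C"] real_le_rsqrt)

lemma prox_objective_minimizing_sequence:
  fixes f :: "'a::euclidean_space \<Rightarrow> ereal" and x :: 'a
  assumes pr: "proper_fun f" and cv: "convex_efun f" and lsc: "lsc_efun f" and lam: "lam > 0"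
  defines "F \<equiv> \<lambda>v. f v + ereal (norm (v - x)^2 / (2*lam))"
  obtains i V where "(INF v. F v) = ereal i"
    "\<And>j. F (V j) < ereal (i + inverse (real (Suc j)))" "bounded (range V)"
proof -
  obtain C where C: "\<And>v. ereal (C + norm (v - x)^2 / (4*lam)) \<le> F v"
    using prox_objective_coercive[OF pr cv lsc lam, of x] unfolding F_def by auto
  have nm: "\<forall>x. f x \<noteq> -\<infinity>" using pr unfolding proper_fun_def by auto
  obtain u0 where "f u0 < \<infinity>" using pr unfolding proper_fun_def by auto
  then obtain c0 where c0: "f u0 = ereal c0" using nm by (cases "f u0") auto
  have "ereal C \<le> (INF v. F v)"
  proof (rule INF_greatest)
    fix v
    have "ereal C \<le> ereal (C + norm (v - x)^2 / (4*lam))" using lam by simp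
    thus "ereal C \<le> F v" using C[of v] by (rule order_trans)
  qed
  moreover have "(INF v. F v) \<le> ereal (c0 + norm (u0 - x)^2 / (2*lam))"
    using INF_lower[of u0 UNIV F] unfolding F_def c0 by simp
  ultimately obtain i where i: "(INF v. F v) = ereal i" by (cases "INF v. F v") auto
  have "\<exists>v. F v < ereal (i + inverse (real (Suc j)))" for j
  proof -
    have "(INF v. F v) < ereal (i + inverse (real (Suc j)))" using i by simp
    thus ?thesis by (auto simp: Inf_less_iff)
  qed
  then obtain V where V: "\<And>j. F (V j) < ereal (i + inverse (real (Suc j)))" by metis
  have "norm (V j - x)^2 \<le> 4 * lam * (i + 1 - C)" for j
  proof -
    have "inverse (real (Suc j)) \<le> 1" by (simp add: inverse_le_1_iff)
    hence "ereal (i + inverse (real (Suc j))) \<le> ereal (i + 1)" by simp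
    hence "ereal (C + norm (V j - x)^2 / (4*lam)) < ereal (i + 1)" using C[of "V j"] V[of j]
      by (meson order_le_less_trans order_less_le_trans)
    thus ?thesis using lam by (simp add: field_simps)
  qed
  hence "bounded (range (\<lambda>j. (V j - x) + x))"
    by (intro bounded_plus_comp bounded_range_if_norm_power2_le) auto
  hence "bounded (range V)" by simp
  with i V show ?thesis by (rule that)
qed

lemma prox_objective_has_minimizer:
  fixes f :: "'a::euclidean_space \<Rightarrow> ereal"
  assumes pr: "proper_fun f" and cv: "convex_efun f" and lsc: "lsc_efun f" and lam: "lam > 0"
  shows "\<exists>u. \<forall>v. f u + ereal (norm (u - x)^2 / (2*lam)) \<le> f v + ereal (norm (v - x)^2 / (2*lam))"
proof -
  define q where "q v = norm (v - x)^2 / (2*lam)" for v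
  define F where "F v = f v + ereal (q v)" for v
  obtain i V where i: "(INF v. F v) = ereal i"
    and V: "\<And>j. F (V j) < ereal (i + inverse (real (Suc j)))" and bV: "bounded (range V)"
    using prox_objective_minimizing_sequence[OF pr cv lsc lam, of x] unfolding F_def q_def by blast
  obtain r l where r: "strict_mono r" "(V \<circ> r) \<longlonglongrightarrow> l"
    using bounded_imp_convergent_subsequence[OF bV] by blast
  have nm: "\<forall>x. f x \<noteq> -\<infinity>" using pr unfolding proper_fun_def by auto
  have fV: "f (V j) \<le> ereal (i + inverse (real (Suc j)) - q (V j))" for j
    using V[of j] nm unfolding F_def by (cases "f (V j)") auto
  have "((\<lambda>n. inverse (real (Suc n))) \<circ> r) \<longlonglongrightarrow> 0"
    by (rule LIMSEQ_subseq_LIMSEQ[OF LIMSEQ_inverse_real_of_nat r(1)])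
  moreover have "(\<lambda>j. q ((V \<circ> r) j)) \<longlonglongrightarrow> q l"
    unfolding q_def by (intro tendsto_intros r(2)) (use lam in auto)
  ultimately have "(\<lambda>j. i + ((\<lambda>n. inverse (real (Suc n))) \<circ> r) j - q ((V \<circ> r) j))
      \<longlonglongrightarrow> i + 0 - q l"
    by (intro tendsto_intros)
  hence lim: "(\<lambda>j. i + inverse (real (Suc (r j))) - q (V (r j))) \<longlonglongrightarrow> i - q l" by simp
  have "f l \<le> ereal (i - q l)"
  proof (rule lsc_efun_sequentially[OF lsc r(2) always_eventually lim])
    show "\<forall>j. f ((V \<circ> r) j) \<le> ereal (i + inverse (real (Suc (r j))) - q (V (r j)))"
      using fV by simp
  qed
  hence "F l \<le> ereal (i - q l) + ereal (q l)" unfolding F_def by (intro add_right_mono)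
  hence "F l \<le> (INF v. F v)" using i by simp
  hence "\<forall>v. F l \<le> F v" by (meson INF_lower UNIV_I order_trans)
  thus ?thesis unfolding F_def q_def by blast
qed

lemma prox_minimizes:
  fixes f :: "'a::euclidean_space \<Rightarrow> ereal"
  assumes "proper_fun f" "convex_efun f" "lsc_efun f" "lam > 0"
  shows "f (prox lam f x) + ereal (norm (prox lam f x - x)^2 / (2*lam))
    \<le> f v + ereal (norm (v - x)^2 / (2*lam))"
  using someI_ex[OF prox_objective_has_minimizer[OF assms]] unfolding prox_def by blast

text \<open>Optimality of \<open>u\<close> against the point \<open>(1 - t) u + t v\<close>; letting \<open>t \<rightarrow> 0\<close> gives the
  variational inequality of the proximal map.\<close>

lemma prox_objective_minimizer_slope:
  fixes f :: "'a::real_inner \<Rightarrow> ereal"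
  assumes cv: "convex_efun f" and lam: "lam > 0"
    and mn: "\<And>v. f u + ereal (norm (u - x)^2 / (2*lam)) \<le> f v + ereal (norm (v - x)^2 / (2*lam))"
    and a: "f u = ereal a" and b: "f v = ereal b" and t: "0 < t" "t \<le> 1"
  shows "a - b \<le> (inner (u - x) (v - u) + t / 2 * norm (v - u)^2) / lam"
proof -
  define p where "p = (1 - t) *\<^sub>R u + t *\<^sub>R v"
  have "f p \<le> ereal ((1 - t) * a + t * b)"
    unfolding p_def using convex_efunD[OF cv _ _ _ t(2)] a b t(1) by simp
  hence "f u + ereal (norm (u - x)^2 / (2*lam))
      \<le> ereal ((1 - t) * a + t * b) + ereal (norm (p - x)^2 / (2*lam))"
    using mn[of p] by (meson add_right_mono order_trans)
  hence "a + norm (u - x)^2 / (2*lam) \<le> (1 - t) * a + t * b + norm (p - x)^2 / (2*lam)"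
    using a by simp
  hence "t * (a - b) \<le> norm (p - x)^2 / (2*lam) - norm (u - x)^2 / (2*lam)"
    by (simp add: algebra_simps)
  hence "t * (a - b) \<le> (norm (p - x)^2 - norm (u - x)^2) / (2*lam)"
    by (simp add: diff_divide_distrib)
  also have "norm (p - x)^2 = norm (u - x)^2 + 2 * t * inner (u - x) (v - u) + t^2 * norm (v - u)^2"
  proof -
    have e: "p - x = (u - x) + t *\<^sub>R (v - u)" unfolding p_def by (simp add: algebra_simps)
    show ?thesis unfolding e power2_norm_eq_inner
      by (simp add: inner_add_left inner_add_right inner_commute algebra_simps power2_eq_square)
  qed
  also have "(norm (u - x)^2 + 2 * t * inner (u - x) (v - u) + t^2 * norm (v - u)^2 - norm (u - x)^2)
      / (2*lam) = t * ((inner (u - x) (v - u) + t / 2 * norm (v - u)^2) / lam)"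
    using lam by (simp add: field_simps power2_eq_square)
  finally show ?thesis using t by (meson mult_left_le_imp_le)
qed

lemma prox_variational_inequality:
  fixes f :: "'a::euclidean_space \<Rightarrow> ereal" and x :: 'a
  assumes pr: "proper_fun f" and cv: "convex_efun f" and lsc: "lsc_efun f" and lam: "lam > 0"
  defines "u \<equiv> prox lam f x"
  shows "\<exists>a. f u = ereal a \<and> (\<forall>v. ereal (a + inner (x - u) (v - u) / lam) \<le> f v)"
proof -
  have mn: "f u + ereal (norm (u - x)^2 / (2*lam)) \<le> f v + ereal (norm (v - x)^2 / (2*lam))" for v
    unfolding u_def by (rule prox_minimizes[OF pr cv lsc lam])
  have nm: "\<forall>x. f x \<noteq> -\<infinity>" using pr unfolding proper_fun_def by auto
  obtain u0 where "f u0 < \<infinity>" using pr unfolding proper_fun_def by auto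
  then obtain a where a: "f u = ereal a" using mn[of u0] nm by (cases "f u") auto
  have "ereal (a + inner (x - u) (v - u) / lam) \<le> f v" for v
  proof (cases "f v")
    case (real b)
    let ?s = "\<lambda>t. (inner (u - x) (v - u) + t / 2 * norm (v - u)^2) / lam"
    have "(?s \<longlongrightarrow> ?s 0) (at_right 0)" by (intro tendsto_intros) (use lam in auto)
    moreover have "eventually (\<lambda>t. a - b \<le> ?s t) (at_right 0)"
      using eventually_at_right_real[OF zero_less_one]
    proof (rule eventually_mono)
      fix t :: real assume "t \<in> {0<..<1}"
      thus "a - b \<le> ?s t" by (intro prox_objective_minimizer_slope[OF cv lam mn a real]) auto
    qed
    ultimately have "a - b \<le> ?s 0" by (rule tendsto_lowerbound) simp
    moreover have "inner (x - u) (v - u) / lam = - (inner (u - x) (v - u) / lam)"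
      by (simp add: inner_diff_left diff_divide_distrib)
    ultimately show ?thesis using real by simp

  qed (use nm in auto)
  thus ?thesis using a by blast
qed

section \<open>Conjugates, gradients and saddle points\<close>

lemma fconj_ge_affine:
  assumes "g w = ereal a"
  shows "ereal (inner p w - a) \<le> fconj g p"
proof -
  have "ereal (inner p w) - g w \<le> fconj g p" unfolding fconj_def by (rule SUP_upper) simp
  thus ?thesis using assms by simp
qed

lemma fconj_at_subgradient:
  assumes gw: "g w = ereal a" and sub: "\<And>u. ereal (a + inner p (u - w)) \<le> g u"
  shows "fconj g p = ereal (inner p w - a)"
proof (rule antisym)
  show "fconj g p \<le> ereal (inner p w - a)" unfolding fconj_def
  proof (rule SUP_least)
    fix u
    show "ereal (inner p u) - g u \<le> ereal (inner p w - a)"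
      using sub[of u] by (cases "g u") (auto simp: inner_diff_right)
  qed
qed (rule fconj_ge_affine[of g w a p, OF gw])

lemma fconj_lsc_sequentially:
  fixes g :: "'a::real_inner \<Rightarrow> ereal"
  assumes nm: "\<forall>x. g x \<noteq> -\<infinity>" and Y: "Y \<longlonglongrightarrow> yh"
    and ev: "eventually (\<lambda>k. fconj g (Y k) \<le> ereal (B k)) sequentially" and B: "B \<longlonglongrightarrow> b"
  shows "fconj g yh \<le> ereal b"
  unfolding fconj_def
proof (rule SUP_least)
  fix u
  show "ereal (inner yh u) - g u \<le> ereal b"
  proof (cases "g u")
    case (real c)
    have "eventually (\<lambda>k. inner (Y k) u - c \<le> B k) sequentially"
      using ev
    proof eventually_elim
      case (elim k)
      have "ereal (inner (Y k) u - c) \<le> fconj g (Y k)" by (rule fconj_ge_affine[of g u c "Y k", OF real])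
      thus ?case using elim by (meson ereal_less_eq(3) order_trans)
    qed
    moreover have "(\<lambda>k. inner (Y k) u - c) \<longlonglongrightarrow> inner yh u - c" by (intro tendsto_intros Y)
    ultimately have "inner yh u - c \<le> b" using tendsto_le[OF trivial_limit_sequentially B] by blast
    thus ?thesis using real by simp
  qed (use nm in auto)
qed

lemma convex_on_gradient_inequality:
  fixes h :: "'a::real_inner \<Rightarrow> real"
  assumes cv: "convex_on UNIV h" and gr: "\<And>u. (h has_derivative (\<lambda>v. inner (gh u) v)) (at u)"
  shows "h u + inner (gh u) (v - u) \<le> h v"
proof -
  define \<phi> where "\<phi> t = h (u + t *\<^sub>R (v - u))" for t :: real
  have "convex_on UNIV \<phi>"
  proof (rule convex_onI)
    fix t a b :: real assume t: "0 < t" "t < 1"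
    have "u + ((1 - t) *\<^sub>R a + t *\<^sub>R b) *\<^sub>R (v - u)
        = (1 - t) *\<^sub>R (u + a *\<^sub>R (v - u)) + t *\<^sub>R (u + b *\<^sub>R (v - u))"
      by (simp add: algebra_simps)
    thus "\<phi> ((1 - t) *\<^sub>R a + t *\<^sub>R b) \<le> (1 - t) * \<phi> a + t * \<phi> b"
      unfolding \<phi>_def using convex_onD[OF cv, of t "u + a *\<^sub>R (v - u)" "u + b *\<^sub>R (v - u)"] t
      by (simp del: scaleR_scaleR)
  qed simp
  moreover have "(\<phi> has_field_derivative (inner (gh u) (v - u))) (at 0)"
  proof -
    have "((\<lambda>t::real. u + t *\<^sub>R (v - u)) has_derivative (\<lambda>t. t *\<^sub>R (v - u))) (at 0)"
      by (auto intro!: derivative_eq_intros)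
    from has_derivative_compose[OF this, of h "\<lambda>v. inner (gh u) v"] gr[of u]
    have "((\<lambda>t. h (u + t *\<^sub>R (v - u))) has_derivative (\<lambda>t. inner (gh u) (t *\<^sub>R (v - u)))) (at 0)"
      by simp
    thus ?thesis unfolding has_field_derivative_def \<phi>_def
      by (rule has_derivative_eq_rhs) (auto simp: fun_eq_iff)
  qed
  ultimately have "\<phi> 1 - \<phi> 0 \<ge> inner (gh u) (v - u) * (1 - 0)"
    by (intro convex_on_imp_above_tangent[where A = UNIV]) auto
  thus ?thesis unfolding \<phi>_def by simp
qed

lemma minorant_if_le_finite_values:
  fixes F :: "'a \<Rightarrow> ereal"
  assumes nm: "\<And>v. F v \<noteq> -\<infinity>" and v0: "F v0 = ereal c0"
    and le: "\<And>v c. F v = ereal c \<Longrightarrow> F u \<le> ereal (c - \<phi> v)"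
  obtains a where "F u = ereal a" "\<And>v. ereal (a + \<phi> v) \<le> F v"
proof -
  from le[OF v0] nm[of u] obtain a where a: "F u = ereal a" by (cases "F u") auto
  have "ereal (a + \<phi> v) \<le> F v" for v
  proof (cases "F v")
    case (real c)
    thus ?thesis using le[OF real] a by simp
  qed (use nm[of v] in auto)
  with a show ?thesis by (rule that)
qed

lemma saddle_point_finite_values:
  fixes f :: "'a::real_inner \<Rightarrow> ereal" and g :: "'b::real_inner \<Rightarrow> ereal"
  assumes sp: "saddle_point f h K g xs ys" and pr: "proper_fun f"
    and Gnm: "\<And>y. fconj g y \<noteq> -\<infinity>" and y1: "fconj g y1 = ereal b1"
  obtains fs Gs where "f xs = ereal fs" "fconj g ys = ereal Gs"
    "\<And>x a. f x = ereal a \<Longrightarrow> fs + h xs + inner (K xs) ys \<le> a + h x + inner (K x) ys"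
    "\<And>y c. fconj g y = ereal c \<Longrightarrow> Gs - inner (K xs) ys \<le> c - inner (K xs) y"
proof -
  have L1: "\<And>y. lagr f h K g xs y \<le> lagr f h K g xs ys"
    and L2: "\<And>x. lagr f h K g xs ys \<le> lagr f h K g x ys"
    using sp unfolding saddle_point_def by auto
  have nm: "\<forall>x. f x \<noteq> -\<infinity>" using pr unfolding proper_fun_def by auto
  obtain x1 where "f x1 < \<infinity>" using pr unfolding proper_fun_def by auto
  then obtain a1 where x1: "f x1 = ereal a1" using nm by (cases "f x1") auto
  obtain Gs where Gs: "fconj g ys = ereal Gs"
  proof (cases "fconj g ys")
    case PInf
    have "lagr f h K g xs ys \<le> lagr f h K g x1 ys" by (rule L2)
    also have "\<dots> = -\<infinity>" unfolding lagr_def using x1 PInf by simp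
    finally have "lagr f h K g xs ys = -\<infinity>" by simp
    moreover have "lagr f h K g xs y1 \<le> lagr f h K g xs ys" by (rule L1)
    moreover have "lagr f h K g xs y1 \<noteq> -\<infinity>"
      unfolding lagr_def using y1 nm[rule_format, of xs] by (cases "f xs") auto
    ultimately show ?thesis by simp
  qed (use Gnm in auto)
  obtain fs where fs: "f xs = ereal fs"
  proof (cases "f xs")
    case PInf
    have "lagr f h K g xs ys = \<infinity>" unfolding lagr_def using PInf Gs by simp
    moreover have "lagr f h K g xs ys \<le> lagr f h K g x1 ys" by (rule L2)
    moreover have "lagr f h K g x1 ys = ereal (a1 + (h x1 + inner (K x1) ys) - Gs)"
      unfolding lagr_def using x1 Gs by simp
    ultimately show ?thesis by simp
  qed (use nm in auto)
  show ?thesis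
  proof (rule that[OF fs Gs])
    show "fs + h xs + inner (K xs) ys \<le> a + h x + inner (K x) ys" if "f x = ereal a" for x a
      using L2[of x] that fs Gs unfolding lagr_def by simp
    show "Gs - inner (K xs) ys \<le> c - inner (K xs) y" if "fconj g y = ereal c" for y c
      using L1[of y] that fs Gs unfolding lagr_def by simp
  qed
qed

lemma saddle_pointI_subgradient:
  fixes f :: "'a::real_inner \<Rightarrow> ereal" and g :: "'b::real_inner \<Rightarrow> ereal"
  assumes fx: "f xh = ereal a" and Gy: "fconj g yh = ereal c"
    and sf: "\<And>u. ereal (a - inner yh (K u - K xh) - inner p (u - xh)) \<le> f u"
    and sg: "\<And>y. ereal (c + inner (K xh) (y - yh)) \<le> fconj g y"
    and hg: "\<And>u. h xh + inner p (u - xh) \<le> h u"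
  shows "saddle_point f h K g xh yh"
  unfolding saddle_point_def
proof (intro allI conjI)
  fix u y
  show "lagr f h K g xh y \<le> lagr f h K g xh yh"
    using sg[of y] fx Gy unfolding lagr_def
    by (cases "fconj g y") (auto simp: inner_diff_right)
  show "lagr f h K g xh yh \<le> lagr f h K g u yh"
  proof (cases "f u")
    case (real b)
    have "a - inner yh (K u - K xh) - inner p (u - xh) \<le> b" using sf[of u] real by simp
    with hg[of u] have "a + h xh + inner (K xh) yh \<le> b + h u + inner (K u) yh"
      by (simp add: inner_diff_right inner_commute)
    thus ?thesis unfolding lagr_def using fx Gy real by simp
  qed (use sf[of u] fx Gy in \<open>auto simp: lagr_def\<close>)
qed

section \<open>The one-step estimate\<close>

lemma combined_variational_inequality:
  fixes xa xb xc za zb xs :: "'a::real_inner" and ya yb ys :: "'b::real_inner"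
    and K :: "'a \<Rightarrow> 'b" and Kt :: "'b \<Rightarrow> 'a" and gh :: "'a \<Rightarrow> 'a"
  assumes adj: "\<And>u y. inner (Kt y) u = inner y (K u)" and lin: "linear K"
    and A: "fs - Fc \<ge> inner (zb - xc) (xs - xc) / t1 - inner (Kt yb + gh xb) (xs - xc)"
    and B: "Fc - Fb \<ge> inner (za - xb) (xc - xb) / t0 - inner (Kt ya + gh xa) (xc - xb)"
    and C: "Gs - Gb \<ge> inner (K xb - s *\<^sub>R (yb - ya)) (ys - yb)"
    and S1: "Fb + h xb + inner (K xb) ys \<ge> fs + h xs + inner (K xs) ys"
    and S2: "Gb - inner (K xs) yb \<ge> Gs - inner (K xs) ys"
    and H: "h xs \<ge> h xb + inner (gh xb) (xs - xb)"
  shows "inner (zb - xc) (xs - xc) / t1 + inner (za - xb) (xc - xb) / t0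
     + s * inner (ya - yb) (ys - yb) + inner (yb - ya) (K xc - K xb)
     + inner (gh xb - gh xa) (xc - xb) \<le> 0"
proof -
  have "inner (Kt yb + gh xb) (xs - xc) = inner yb (K xs) - inner yb (K xc) + inner (gh xb) (xs - xc)"
    "inner (Kt ya + gh xa) (xc - xb) = inner ya (K xc) - inner ya (K xb) + inner (gh xa) (xc - xb)"
    by (simp_all add: inner_add_left adj inner_diff_right)
  moreover have "inner (K xb - s *\<^sub>R (yb - ya)) (ys - yb)
      = inner (K xb) ys - inner yb (K xb) - s * inner (yb - ya) (ys - yb)"
    by (simp add: inner_diff_left inner_diff_right inner_commute)
  moreover have "inner (yb - ya) (K xc - K xb)
      = inner yb (K xc) - inner yb (K xb) - inner ya (K xc) + inner ya (K xb)"
    by (simp add: inner_diff_left inner_diff_right)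
  moreover have "inner (gh xb) (xs - xc) = inner (gh xb) (xs - xb) - inner (gh xb) (xc - xb)"
    "inner (gh xb - gh xa) (xc - xb) = inner (gh xb) (xc - xb) - inner (gh xa) (xc - xb)"
    "s * inner (ya - yb) (ys - yb) = - (s * inner (yb - ya) (ys - yb))"
    "inner (K xs) yb = inner yb (K xs)"
    by (simp_all add: inner_diff_left inner_diff_right inner_commute algebra_simps)
  ultimately show ?thesis using A B C S1 S2 H by linarith
qed

lemma cross_term_bound:
  fixes I p q r c s t :: real
  assumes I: "\<bar>I\<bar> \<le> p * q" and tq: "t * q \<le> c * r"
    and nn: "0 \<le> t" "0 \<le> c" "0 \<le> p" and s: "0 < s"
  shows "- (c * (s * p^2 + r^2 / s)) \<le> 2 * t * I"
proof -
  have "2 * t * \<bar>I\<bar> \<le> 2 * p * (t * q)"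
    using mult_left_mono[OF I nn(1)] by (simp add: algebra_simps)
  also have "\<dots> \<le> 2 * p * (c * r)" using tq nn by (intro mult_left_mono) auto
  also have "\<dots> \<le> c * (s * p^2 + r^2 / s)"
  proof -
    have "0 \<le> (s * p - r)^2 / s" using s by simp
    hence "2 * p * r \<le> s * p^2 + r^2 / s" using s by (simp add: field_simps power2_eq_square)
    thus ?thesis using nn(2) by (metis mult.assoc mult.left_commute mult_left_mono)
  qed
  finally have "2 * t * \<bar>I\<bar> \<le> c * (s * p^2 + r^2 / s)" .
  moreover have "2 * t * (- \<bar>I\<bar>) \<le> 2 * t * I" using nn(1) by (intro mult_left_mono) auto
  ultimately show ?thesis by linarith
qed

lemma norm_affine_combination_identity:
  fixes a c :: "'a::real_inner"
  assumes "p + q = 1" "p \<noteq> 0"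
  shows "norm a^2 = norm (p *\<^sub>R a + q *\<^sub>R c)^2 / p - q / p * norm c^2 + q * norm (a - c)^2"
proof -
  have q: "q = 1 - p" using assms(1) by simp
  show ?thesis using assms(2) unfolding q power2_norm_eq_inner
    by (simp add: inner_add_left inner_add_right inner_diff_left inner_diff_right inner_commute
      field_simps power2_eq_square)
qed

lemma golden_combination_norm:
  fixes xc zb zc xs :: "'a::real_inner"
  assumes zc: "zc = ((\<psi> - 1) / \<psi>) *\<^sub>R xc + (1 / \<psi>) *\<^sub>R zb" and \<psi>: "1 < \<psi>"
  shows "norm (xc - xs)^2 = \<psi> / (\<psi> - 1) * norm (zc - xs)^2 - 1 / (\<psi> - 1) * norm (zb - xs)^2
    + 1 / \<psi> * norm (zb - xc)^2"
proof -
  have sum1: "(\<psi> - 1) / \<psi> + 1 / \<psi> = 1" using \<psi> by (simp add: field_simps)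
  have "((\<psi> - 1) / \<psi>) *\<^sub>R (xc - xs) + (1 / \<psi>) *\<^sub>R (zb - xs)
      = zc - (((\<psi> - 1) / \<psi> + 1 / \<psi>) *\<^sub>R xs)"
    unfolding zc by (simp add: algebra_simps)
  hence "zc - xs = ((\<psi> - 1) / \<psi>) *\<^sub>R (xc - xs) + (1 / \<psi>) *\<^sub>R (zb - xs)"
    unfolding sum1 by simp
  hence "norm (xc - xs)^2 = norm (zc - xs)^2 / ((\<psi> - 1) / \<psi>)
      - (1 / \<psi>) / ((\<psi> - 1) / \<psi>) * norm (zb - xs)^2 + 1 / \<psi> * norm ((xc - xs) - (zb - xs))^2"
    using norm_affine_combination_identity[OF sum1, of "xc - xs" "zb - xs"] \<psi> by simp
  moreover have "norm (zc - xs)^2 / ((\<psi> - 1) / \<psi>) = \<psi> / (\<psi> - 1) * norm (zc - xs)^2"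
    "(1 / \<psi>) / ((\<psi> - 1) / \<psi>) = 1 / (\<psi> - 1)"
    using \<psi> by (simp_all add: field_simps)
  moreover have "norm ((xc - xs) - (zb - xs))^2 = norm (zb - xc)^2"
    by (simp add: norm_minus_commute)
  ultimately show ?thesis by metis
qed

lemma variational_inequality_norm_form:
  fixes xb xc za zb xs dg :: "'a::real_inner" and ya yb ys dk :: "'b::real_inner"
  assumes vi: "inner (zb - xc) (xs - xc) / t1 + inner (za - xb) (xc - xb) / t0
      + inner (ya - yb) (ys - yb) / (\<beta> * t1) + inner (yb - ya) dk + inner dg (xc - xb) \<le> 0"
    and zb: "zb = ((\<psi> - 1) / \<psi>) *\<^sub>R xb + (1 / \<psi>) *\<^sub>R za"
    and t1: "0 < t1" and \<beta>: "0 < \<beta>" and \<psi>: "1 < \<psi>"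
  shows "norm (zb - xc)^2 + norm (xc - xs)^2 - norm (zb - xs)^2
      + t1 / t0 * (\<psi> * (norm (zb - xb)^2 + norm (xc - xb)^2 - norm (zb - xc)^2))
      + 1 / \<beta> * (norm (yb - ya)^2 + norm (yb - ys)^2 - norm (ya - ys)^2)
      + 2 * t1 * inner (yb - ya) dk + 2 * t1 * inner dg (xc - xb) \<le> 0"
proof -
  have "2 * inner (zb - xc) (xs - xc) = norm (zb - xc)^2 + norm (xc - xs)^2 - norm (zb - xs)^2"
    using dot_norm_neg[of "zb - xc" "xs - xc"] by (simp add: norm_minus_commute)
  moreover have "\<psi> *\<^sub>R zb = (\<psi> - 1) *\<^sub>R xb + za" unfolding zb using \<psi> by (simp add: scaleR_add_right)
  hence "za - xb = \<psi> *\<^sub>R (zb - xb)" by (simp add: algebra_simps)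
  hence "2 * inner (za - xb) (xc - xb) = \<psi> * (norm (zb - xb)^2 + norm (xc - xb)^2 - norm (zb - xc)^2)"
    using dot_norm_neg[of "zb - xb" "xc - xb"] by simp
  moreover have "2 * inner (ya - yb) (ys - yb) = norm (yb - ya)^2 + norm (yb - ys)^2 - norm (ya - ys)^2"
    using dot_norm_neg[of "ya - yb" "ys - yb"] by (simp add: norm_minus_commute)
  moreover have "2 * t1 * (inner (zb - xc) (xs - xc) / t1 + inner (za - xb) (xc - xb) / t0
      + inner (ya - yb) (ys - yb) / (\<beta> * t1) + inner (yb - ya) dk + inner dg (xc - xb))
    = 2 * inner (zb - xc) (xs - xc) + t1 / t0 * (2 * inner (za - xb) (xc - xb))
      + 1 / \<beta> * (2 * inner (ya - yb) (ys - yb))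
      + 2 * t1 * inner (yb - ya) dk + 2 * t1 * inner dg (xc - xb)"
    using t1 \<beta> by (simp add: field_simps)
  moreover have "2 * t1 * (inner (zb - xc) (xs - xc) / t1 + inner (za - xb) (xc - xb) / t0
      + inner (ya - yb) (ys - yb) / (\<beta> * t1) + inner (yb - ya) dk + inner dg (xc - xb)) \<le> 0"
    using vi t1 by (simp add: mult_nonneg_nonpos)
  ultimately show ?thesis by simp
qed

lemma coupling_term_lower_bound:
  fixes dk e :: "'b::real_inner" and d :: "'a::real_normed_vector"
  assumes dk: "t2 * norm dk \<le> \<mu> * norm d / sqrt \<beta>"
    and t: "0 < t1" "0 < t2" and \<beta>: "0 < \<beta>" and \<mu>: "0 \<le> \<mu>"
  shows "- (t1 / t2 * \<mu> * (norm d^2 + norm e^2 / \<beta>)) \<le> 2 * t1 * inner e dk"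
proof -
  have "t1 * norm dk = t1 / t2 * (t2 * norm dk)" using t by simp
  also have "\<dots> \<le> t1 / t2 * (\<mu> * norm d / sqrt \<beta>)"
    using dk t by (intro mult_left_mono) auto
  finally have "t1 * norm dk \<le> t1 / t2 * (\<mu> / sqrt \<beta>) * norm d" by simp
  from cross_term_bound[OF Cauchy_Schwarz_ineq2 this _ _ _ positive_imp_inverse_positive]
  have "- (t1 / t2 * (\<mu> / sqrt \<beta>) * (inverse (sqrt \<beta>) * norm e^2
      + norm d^2 / inverse (sqrt \<beta>))) \<le> 2 * t1 * inner e dk"
    using t \<beta> \<mu> by simp
  moreover have "sqrt \<beta> * (sqrt \<beta> * c) = \<beta> * c" for c
    using \<beta> by (simp add: mult.assoc[symmetric])
  ultimately show ?thesis using \<beta> t by (simp add: field_simps power2_eq_square)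
qed

text \<open>The term left over is \<open>(1 + 1/\<psi> - t\<^sub>1/t\<^sub>0 \<psi>) \<parallel>zb - xc\<parallel>\<^sup>2\<close>, nonnegative
  because \<open>\<psi>\<^sup>2 \<le> \<psi> + 1\<close> and \<open>t\<^sub>1 \<le> t\<^sub>0\<close>.\<close>

lemma golden_energy_inequality:
  fixes xa xb xc za zb zc xs dg :: "'a::real_inner" and ya yb ys dk :: "'b::real_inner"
  assumes vi: "inner (zb - xc) (xs - xc) / t1 + inner (za - xb) (xc - xb) / t0
      + inner (ya - yb) (ys - yb) / (\<beta> * t1) + inner (yb - ya) dk + inner dg (xc - xb) \<le> 0"
    and zb: "zb = ((\<psi> - 1) / \<psi>) *\<^sub>R xb + (1 / \<psi>) *\<^sub>R za"
    and zc: "zc = ((\<psi> - 1) / \<psi>) *\<^sub>R xc + (1 / \<psi>) *\<^sub>R zb"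
    and dk: "t2 * norm dk \<le> \<mu> * norm (xc - xb) / sqrt \<beta>"
    and dg: "t1 * norm dg \<le> \<mu>' * norm (xb - xa)"
    and t: "0 < t1" "t1 \<le> t0" "0 < t2" and \<beta>: "0 < \<beta>"
    and \<psi>: "1 < \<psi>" "\<psi>^2 \<le> \<psi> + 1" and \<mu>: "0 \<le> \<mu>" "0 \<le> \<mu>'"
  shows "\<psi> / (\<psi> - 1) * norm (zc - xs)^2 + norm (yb - ys)^2 / \<beta> + \<mu>' * norm (xc - xb)^2
      + (t1 / t0 * \<psi> - t1 / t2 * \<mu> - 2 * \<mu>') * norm (xc - xb)^2
      + (1 - t1 / t2 * \<mu>) / \<beta> * norm (yb - ya)^2 + t1 / t0 * \<psi> * norm (zb - xb)^2
    \<le> \<psi> / (\<psi> - 1) * norm (zb - xs)^2 + norm (ya - ys)^2 / \<beta> + \<mu>' * norm (xb - xa)^2"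
proof -
  define r k a b p where "r = t1 / t0" and "k = t1 / t2 * \<mu>" and "a = 1 / (\<psi> - 1)"
    and "b = 1 / \<beta>" and "p = 1 / \<psi>"
  define nzc nzb nxc dzc dzb dx dxo nyb nya dy
    where "nzc = norm (zc - xs)^2" and "nzb = norm (zb - xs)^2" and "nxc = norm (xc - xs)^2"
      and "dzc = norm (zb - xc)^2" and "dzb = norm (zb - xb)^2"
      and "dx = norm (xc - xb)^2" and "dxo = norm (xb - xa)^2"
      and "nyb = norm (yb - ys)^2" and "nya = norm (ya - ys)^2" and "dy = norm (yb - ya)^2"
  define Q1 Q2 where "Q1 = 2 * t1 * inner (yb - ya) dk" and "Q2 = 2 * t1 * inner dg (xc - xb)"
  have M: "dzc + nxc - nzb + r * (\<psi> * (dzb + dx - dzc)) + b * (dy + nyb - nya) + Q1 + Q2 \<le> 0"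
    using variational_inequality_norm_form[OF vi zb t(1) \<beta> \<psi>(1)]
    unfolding r_def b_def Q1_def Q2_def nxc_def nzb_def dzc_def dzb_def dx_def dy_def nyb_def nya_def .
  have c: "\<psi> / (\<psi> - 1) = 1 + a" unfolding a_def using \<psi>(1) by (simp add: field_simps)
  have G: "nxc = (1 + a) * nzc - a * nzb + p * dzc"
    using golden_combination_norm[OF zc \<psi>(1), of xs]
    unfolding c a_def[symmetric] p_def[symmetric] nxc_def nzc_def nzb_def dzc_def .
  have Y1: "- (k * dx + k * b * dy) \<le> Q1"
    using coupling_term_lower_bound[OF dk t(1,3) \<beta> \<mu>(1), of "yb - ya"]
    unfolding k_def b_def dx_def dy_def Q1_def by (simp add: algebra_simps)
  have Y2: "- (\<mu>' * dx + \<mu>' * dxo) \<le> Q2"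
    using cross_term_bound[of "inner dg (xc - xb)" "norm (xc - xb)" "norm dg" t1 \<mu>' "norm (xb - xa)" 1]
      Cauchy_Schwarz_ineq2[of dg "xc - xb"] dg t(1) \<mu>
    unfolding Q2_def dx_def dxo_def by (simp add: mult.commute algebra_simps)
  have "\<psi> \<le> 1 + p" unfolding p_def using \<psi> by (simp add: field_simps power2_eq_square)
  moreover have "r * \<psi> \<le> \<psi>" unfolding r_def using t \<psi>(1) by (simp add: field_simps)
  ultimately have Dr: "0 \<le> (1 + p - r * \<psi>) * dzc" unfolding dzc_def by simp
  have "(1 + a) * nzc + b * nyb + \<mu>' * dx + (r * \<psi> - k - 2 * \<mu>') * dx + (b - k * b) * dy
      + r * \<psi> * dzb - ((1 + a) * nzb + b * nya + \<mu>' * dxo)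
    = (dzc + nxc - nzb + r * (\<psi> * (dzb + dx - dzc)) + b * (dy + nyb - nya) + Q1 + Q2)
      - (Q1 + (k * dx + k * b * dy)) - (Q2 + (\<mu>' * dx + \<mu>' * dxo)) - (1 + p - r * \<psi>) * dzc"
    unfolding G by (simp add: algebra_simps)
  hence "(1 + a) * nzc + b * nyb + \<mu>' * dx + (r * \<psi> - k - 2 * \<mu>') * dx + (b - k * b) * dy
      + r * \<psi> * dzb \<le> (1 + a) * nzb + b * nya + \<mu>' * dxo"
    using M Y1 Y2 Dr by linarith
  moreover have "b - k * b = (1 - t1 / t2 * \<mu>) / \<beta>" "b * e = e / \<beta>" for e
    unfolding b_def k_def by (simp_all add: diff_divide_distrib)
  ultimately show ?thesis
    unfolding c[symmetric] r_def k_def nzc_def nzb_def nyb_def nya_def dx_def dxo_def dy_def dzb_def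
    by simp
qed

section \<open>Convergence of the iteration\<close>

lemma descent_sequence_convergent:
  fixes E d :: "nat \<Rightarrow> real"
  assumes ev: "eventually (\<lambda>m. E (Suc m) + d m \<le> E m) sequentially"
    and d0: "\<And>m. 0 \<le> d m" and E0: "\<And>m. 0 \<le> E m"
  shows "convergent E" "d \<longlonglongrightarrow> 0"
proof -
  obtain N where N: "\<And>m. m \<ge> N \<Longrightarrow> E (Suc m) + d m \<le> E m"
    using ev unfolding eventually_sequentially by auto
  have "E (Suc k + N) \<le> E (k + N)" for k using N[of "k + N"] d0[of "k + N"] by simp
  hence "decseq (\<lambda>k. E (k + N))" unfolding decseq_Suc_iff by simp
  then obtain l where "(\<lambda>k. E (k + N)) \<longlonglongrightarrow> l" using decseq_convergent[of _ 0] E0 by blast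
  hence El: "E \<longlonglongrightarrow> l" by (rule LIMSEQ_offset)
  thus "convergent E" by (auto simp: convergent_def)
  have "eventually (\<lambda>m. norm (d m) \<le> E m - E (Suc m)) sequentially"
    using ev by eventually_elim (use d0 in simp)
  moreover have "(\<lambda>m. E m - E (Suc m)) \<longlonglongrightarrow> 0"
    using tendsto_diff[OF El LIMSEQ_Suc[OF El]] by simp
  ultimately show "d \<longlonglongrightarrow> 0" by (rule Lim_null_comparison)
qed

lemma tendsto_zero_if_norm_power2_le:
  fixes v :: "nat \<Rightarrow> 'a::real_normed_vector"
  assumes "\<And>m. norm (v m)^2 \<le> e m" "e \<longlonglongrightarrow> 0"
  shows "v \<longlonglongrightarrow> 0"
proof (rule Lim_null_comparison)
  show "eventually (\<lambda>m. norm (v m) \<le> sqrt (e m)) sequentially"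
    using assms(1) by (simp add: real_le_rsqrt)
  show "(\<lambda>m. sqrt (e m)) \<longlonglongrightarrow> 0" using tendsto_real_sqrt[OF assms(2)] by simp
qed

lemma le_golden_imp_square_le:
  fixes \<psi> :: real
  assumes "0 \<le> \<psi>" "\<psi> \<le> golden"
  shows "\<psi>^2 \<le> \<psi> + 1"
proof -
  have "1 \<le> sqrt 5" by simp
  hence "0 \<le> \<psi> - (1 - sqrt 5) / 2" using assms(1) by (simp add: field_simps; linarith)
  moreover have "\<psi> - golden \<le> 0" using assms(2) by simp
  ultimately have "(\<psi> - golden) * (\<psi> - (1 - sqrt 5) / 2) \<le> 0"
    by (simp add: mult_nonpos_nonneg)
  moreover have "(\<psi> - golden) * (\<psi> - (1 - sqrt 5) / 2) = \<psi>^2 - \<psi> - 1"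
    unfolding golden_def by (simp add: field_simps power2_eq_square)
  ultimately show ?thesis by simp
qed

lemma ratio_lower_bound:
  fixes a :: "'a::real_normed_vector" and d :: "'b::real_normed_vector"
  assumes "norm a \<le> B * norm d" "a \<noteq> 0" "0 < B" "0 \<le> c"
  shows "c / B \<le> c * norm d / norm a"
proof -
  have "0 < B * norm d" using assms(1,2) by (meson zero_less_norm_iff order_less_le_trans)
  hence "0 < norm d" using assms(3) by (simp add: zero_less_mult_iff)
  hence "c / B = c * norm d / (B * norm d)" by simp
  also have "\<dots> \<le> c * norm d / norm a"
    using assms \<open>0 < norm d\<close> by (intro divide_left_mono) auto
  finally show ?thesis .
qed

lemma mult_norm_le_if_le_ratio:
  fixes a :: "'a::real_normed_vector"
  assumes "t \<le> (if a = 0 then s else c / norm a)" "0 \<le> c"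
  shows "t * norm a \<le> c"
  using assms by (cases "a = 0") (auto simp: pos_le_divide_eq)

locale pgrpda =
  fixes f :: "'a::euclidean_space \<Rightarrow> ereal" and g :: "'b::euclidean_space \<Rightarrow> ereal"
    and K :: "'a \<Rightarrow> 'b" and h :: "'a \<Rightarrow> real" and gh :: "'a \<Rightarrow> 'a" and L :: real
    and x z :: "nat \<Rightarrow> 'a" and y w :: "nat \<Rightarrow> 'b" and tau :: "nat \<Rightarrow> real"
    and \<beta> \<psi> \<mu> \<mu>' :: real
  assumes f_pcl: "proper_fun f" "convex_efun f" "lsc_efun f"
    and g_pcl: "proper_fun g" "convex_efun g" "lsc_efun g"
    and K_lin: "linear K"
    and h_conv: "convex_on UNIV h"
    and h_grad: "\<And>u. (h has_derivative (\<lambda>v. gh u \<bullet> v)) (at u)"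
    and gh_lip: "\<And>u v. norm (gh u - gh v) \<le> L * norm (u - v)"
    and beta: "\<beta> > 0"
    and psi: "1 < \<psi>" "\<psi>^2 \<le> \<psi> + 1"
    and mu: "0 < 2 * \<mu>'" "2 * \<mu>' < \<mu>" "\<mu> < \<psi> / 2"
    and tau0: "tau 0 > 0"
    and z_step: "\<And>n. z (Suc n) = ((\<psi> - 1) / \<psi>) *\<^sub>R x n + (1 / \<psi>) *\<^sub>R z n"
    and x_step: "\<And>n. x (Suc n) = prox (tau n) f
                   (z (Suc n) - tau n *\<^sub>R adjoint K (y n) - tau n *\<^sub>R gh (x n))"
    and tau_step: "\<And>n. tau (Suc n) = min (tau n)
                   (min (if K (x (Suc n)) - K (x n) = 0 then tau n
                         else \<mu> * norm (x (Suc n) - x n) / (sqrt \<beta> * norm (K (x (Suc n)) - K (x n))))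
                        (if gh (x (Suc n)) - gh (x n) = 0 then tau n
                         else \<mu>' * norm (x (Suc n) - x n) / norm (gh (x (Suc n)) - gh (x n))))"
    and w_step: "\<And>n. w (Suc n) = prox (1 / (\<beta> * tau (Suc n))) g
                   ((1 / (\<beta> * tau (Suc n))) *\<^sub>R y n + K (x (Suc n)))"
    and y_step: "\<And>n. y (Suc n) = y n + (\<beta> * tau (Suc n)) *\<^sub>R (K (x (Suc n)) - w (Suc n))"
begin

lemma mu_pos: "0 < \<mu>" "0 < \<mu>'"
  using mu by auto

lemma mu_less_one: "\<mu> < 1"
proof -
  have "\<psi> * \<psi> < \<psi> * 2" using psi unfolding power2_eq_square by linarith
  hence "\<psi> < 2" using psi(1) by simp
  thus ?thesis using mu(3) by simp
qed

lemma tau_Suc_le: "tau (Suc n) \<le> tau n"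
  using tau_step by simp

lemma tau_K_bound: "tau (Suc n) * norm (K (x (Suc n)) - K (x n)) \<le> \<mu> * norm (x (Suc n) - x n) / sqrt \<beta>"
proof (rule mult_norm_le_if_le_ratio)
  have "tau (Suc n) \<le> (if K (x (Suc n)) - K (x n) = 0 then tau n
      else \<mu> * norm (x (Suc n) - x n) / (sqrt \<beta> * norm (K (x (Suc n)) - K (x n))))"
    unfolding tau_step[of n] by (intro min.coboundedI2 min.cobounded1)
  thus "tau (Suc n) \<le> (if K (x (Suc n)) - K (x n) = 0 then tau n
      else \<mu> * norm (x (Suc n) - x n) / sqrt \<beta> / norm (K (x (Suc n)) - K (x n)))"
    by (simp split: if_split_asm)
qed (use mu_pos beta in simp)

lemma tau_grad_bound: "tau (Suc n) * norm (gh (x (Suc n)) - gh (x n)) \<le> \<mu>' * norm (x (Suc n) - x n)"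
proof (rule mult_norm_le_if_le_ratio)
  show "tau (Suc n) \<le> (if gh (x (Suc n)) - gh (x n) = 0 then tau n
      else \<mu>' * norm (x (Suc n) - x n) / norm (gh (x (Suc n)) - gh (x n)))"
    unfolding tau_step[of n] by (intro min.coboundedI2 min.cobounded2)
qed (use mu_pos in simp)

text \<open>The step sizes stay away from zero because \<open>K\<close> is bounded and \<open>\<nabla>h\<close> is Lipschitz.\<close>

lemma tau_lower_bound:
  obtains tmin where "0 < tmin" "\<And>n. tmin \<le> tau n"
proof -
  obtain B where B: "0 < B" "\<And>u. norm (K u) \<le> B * norm u" using linear_bounded_pos[OF K_lin] by blast
  define Lp where "Lp = max L 1"
  define tmin where "tmin = min (tau 0) (min (\<mu> / sqrt \<beta> / B) (\<mu>' / Lp))"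
  have "tmin \<le> tau n" for n
  proof (induction n)
    case 0
    show ?case unfolding tmin_def by simp
  next
    case (Suc n)
    let ?dx = "x (Suc n) - x n"
    have "tmin \<le> (if K (x (Suc n)) - K (x n) = 0 then tau n
        else \<mu> * norm ?dx / (sqrt \<beta> * norm (K (x (Suc n)) - K (x n))))"
    proof (cases "K (x (Suc n)) - K (x n) = 0")
      case False
      have "norm (K (x (Suc n)) - K (x n)) \<le> B * norm ?dx"
        using B(2)[of ?dx] linear_diff[OF K_lin] by metis
      from ratio_lower_bound[OF this False B(1), of "\<mu> / sqrt \<beta>"]
      have "\<mu> / sqrt \<beta> / B \<le> \<mu> * norm ?dx / (sqrt \<beta> * norm (K (x (Suc n)) - K (x n)))"
        using mu_pos beta by simp
      thus ?thesis using False unfolding tmin_def by simp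
    qed (use Suc in simp)
    moreover have "tmin \<le> (if gh (x (Suc n)) - gh (x n) = 0 then tau n
        else \<mu>' * norm ?dx / norm (gh (x (Suc n)) - gh (x n)))"
    proof (cases "gh (x (Suc n)) - gh (x n) = 0")
      case False
      have "norm (gh (x (Suc n)) - gh (x n)) \<le> Lp * norm ?dx"
        using gh_lip[of "x (Suc n)" "x n"] unfolding Lp_def
        by (meson max.cobounded1 mult_right_mono norm_ge_zero order_trans)
      from ratio_lower_bound[OF this False _, of "\<mu>'"]
      have "\<mu>' / Lp \<le> \<mu>' * norm ?dx / norm (gh (x (Suc n)) - gh (x n))"
        using mu_pos unfolding Lp_def by simp
      thus ?thesis using False unfolding tmin_def by simp
    qed (use Suc in simp)
    ultimately show ?case using tau_step[of n] Suc by simp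
  qed
  moreover have "0 < tmin" unfolding tmin_def Lp_def using tau0 mu_pos beta B(1) by simp
  ultimately show ?thesis using that by blast
qed

lemma tau_pos: "0 < tau n"
proof -
  obtain tmin where "0 < tmin" "\<And>n. tmin \<le> tau n" using tau_lower_bound by blast
  thus ?thesis by (meson less_le_trans)
qed

lemma tau_limit:
  obtains tinf where "0 < tinf" "tau \<longlonglongrightarrow> tinf"
proof -
  obtain tmin where tmin: "0 < tmin" "\<And>n. tmin \<le> tau n" using tau_lower_bound by blast
  have "decseq tau" using tau_Suc_le by (simp add: decseq_Suc_iff)
  then obtain tinf where "tau \<longlonglongrightarrow> tinf" using decseq_convergent[of tau tmin] tmin by blast
  moreover from this have "tmin \<le> tinf" using tmin(2) by (intro LIMSEQ_le_const) auto
  ultimately show ?thesis using that tmin(1) by (meson order_less_le_trans)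
qed

lemma adjoint_K: "inner (adjoint K v) u = inner v (K u)"
  using adjoint_works[OF K_lin] by (simp add: inner_commute)

lemma primal_step:
  "\<exists>a. f (x (Suc n)) = ereal a \<and> (\<forall>v. ereal (a + inner (z (Suc n) - x (Suc n)) (v - x (Suc n)) / tau n
      - inner (adjoint K (y n) + gh (x n)) (v - x (Suc n))) \<le> f v)"
proof -
  define p where "p = z (Suc n) - tau n *\<^sub>R adjoint K (y n) - tau n *\<^sub>R gh (x n)"
  have xp: "prox (tau n) f p = x (Suc n)" unfolding p_def by (rule x_step[symmetric])
  obtain a where a: "f (x (Suc n)) = ereal a"
    and vi: "\<And>v. ereal (a + inner (p - x (Suc n)) (v - x (Suc n)) / tau n) \<le> f v"
    using prox_variational_inequality[OF f_pcl tau_pos[of n], of p] unfolding xp by blast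
  have "inner (p - x (Suc n)) d / tau n
      = inner (z (Suc n) - x (Suc n)) d / tau n - inner (adjoint K (y n) + gh (x n)) d" for d
    using tau_pos[of n] unfolding p_def
    by (simp add: inner_diff_left inner_add_left field_simps)
  thus ?thesis using a vi by (metis add_diff_eq)
qed

lemma dual_step:
  "\<exists>c. fconj g (y (Suc n)) = ereal c \<and> (\<forall>v. ereal (c + inner (w (Suc n)) (v - y (Suc n))) \<le> fconj g v)"
proof -
  define \<sigma> where "\<sigma> = \<beta> * tau (Suc n)"
  have \<sigma>: "0 < \<sigma>" unfolding \<sigma>_def using beta tau_pos by simp
  define q where "q = (1 / \<sigma>) *\<^sub>R y n + K (x (Suc n))"
  have wq: "prox (1 / \<sigma>) g q = w (Suc n)" unfolding q_def \<sigma>_def by (rule w_step[symmetric])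
  obtain a where a: "g (w (Suc n)) = ereal a"
    and vi: "\<And>v. ereal (a + inner (q - w (Suc n)) (v - w (Suc n)) / (1 / \<sigma>)) \<le> g v"
    using prox_variational_inequality[OF g_pcl, of "1 / \<sigma>" q] \<sigma> unfolding wq by auto
  have "\<sigma> *\<^sub>R (q - w (Suc n)) = y (Suc n)"
    unfolding q_def y_step \<sigma>_def[symmetric] using \<sigma> by (simp add: algebra_simps)
  hence "inner (q - w (Suc n)) d / (1 / \<sigma>) = inner (y (Suc n)) d" for d
    by (metis divide_divide_eq_right div_by_1 inner_scaleR_left mult.commute)
  hence sub: "\<And>v. ereal (a + inner (y (Suc n)) (v - w (Suc n))) \<le> g v" using vi by simp
  have "ereal (inner (y (Suc n)) (w (Suc n)) - a + inner (w (Suc n)) (v - y (Suc n))) \<le> fconj g v" for v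
    using fconj_ge_affine[of g "w (Suc n)" a v, OF a] by (simp add: inner_diff_right inner_commute)
  thus ?thesis using fconj_at_subgradient[OF a sub] by blast
qed

lemma fconj_g_neq_MInf: "fconj g v \<noteq> -\<infinity>"
proof -
  obtain c where "ereal (c + inner (w 1) (v - y 1)) \<le> fconj g v" using dual_step[of 0] by auto
  thus ?thesis by auto
qed

lemma w_eq: "w (Suc n) = K (x (Suc n)) - (1 / (\<beta> * tau (Suc n))) *\<^sub>R (y (Suc n) - y n)"
proof -
  have "(1 / (\<beta> * tau (Suc n))) *\<^sub>R (y (Suc n) - y n) = K (x (Suc n)) - w (Suc n)"
    unfolding y_step using beta tau_pos[of "Suc n"] by simp
  thus ?thesis by (simp add: algebra_simps)
qed

text \<open>\<open>energy a b n\<close> is the Lyapunov function after \<open>n + 1\<close> iterations; the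
  shift of indices lets one step of the estimate use \<open>x\<^sub>n\<close>, \<open>x\<^sub>n\<^sub>+\<^sub>1\<close>, \<open>x\<^sub>n\<^sub>+\<^sub>2\<close>.\<close>

definition energy :: "'a \<Rightarrow> 'b \<Rightarrow> nat \<Rightarrow> real" where
  "energy a b n = \<psi> / (\<psi> - 1) * norm (z (Suc (Suc n)) - a)^2 + norm (y n - b)^2 / \<beta>
    + \<mu>' * norm (x (Suc n) - x n)^2"

definition residual :: "nat \<Rightarrow> real" where
  "residual n = norm (x (Suc (Suc n)) - x (Suc n))^2 + norm (y (Suc n) - y n)^2
    + norm (z (Suc (Suc n)) - x (Suc n))^2"

lemma energy_nonneg: "0 \<le> energy a b n"
  unfolding energy_def using psi(1) beta mu_pos by simp

lemma residual_nonneg: "0 \<le> residual n"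
  unfolding residual_def by simp

lemma energy_one_step:
  assumes sp: "saddle_point f h K g a b"
  shows "energy a b (Suc m)
      + (tau (Suc m) / tau m * \<psi> - tau (Suc m) / tau (Suc (Suc m)) * \<mu> - 2 * \<mu>')
        * norm (x (Suc (Suc m)) - x (Suc m))^2
      + (1 - tau (Suc m) / tau (Suc (Suc m)) * \<mu>) / \<beta> * norm (y (Suc m) - y m)^2
      + tau (Suc m) / tau m * \<psi> * norm (z (Suc (Suc m)) - x (Suc m))^2
    \<le> energy a b m"
proof -
  obtain c1 where c1: "fconj g (y (Suc 0)) = ereal c1" using dual_step[of 0] by blast
  obtain fs Gs where fs: "f a = ereal fs" and Gs: "fconj g b = ereal Gs"
    and S1: "\<And>u c. f u = ereal c \<Longrightarrow> fs + h a + inner (K a) b \<le> c + h u + inner (K u) b"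
    and S2: "\<And>v c. fconj g v = ereal c \<Longrightarrow> Gs - inner (K a) b \<le> c - inner (K a) v"
    using saddle_point_finite_values[OF sp f_pcl(1) fconj_g_neq_MInf c1] by metis
  obtain F1 where F1: "f (x (Suc m)) = ereal F1" and P1: "\<And>v. ereal (F1
      + inner (z (Suc m) - x (Suc m)) (v - x (Suc m)) / tau m
      - inner (adjoint K (y m) + gh (x m)) (v - x (Suc m))) \<le> f v"
    using primal_step[of m] by blast
  obtain F2 where F2: "f (x (Suc (Suc m))) = ereal F2" and P2: "\<And>v. ereal (F2
      + inner (z (Suc (Suc m)) - x (Suc (Suc m))) (v - x (Suc (Suc m))) / tau (Suc m)
      - inner (adjoint K (y (Suc m)) + gh (x (Suc m))) (v - x (Suc (Suc m)))) \<le> f v"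
    using primal_step[of "Suc m"] by blast
  obtain G1 where G1: "fconj g (y (Suc m)) = ereal G1"
    and D1: "\<And>v. ereal (G1 + inner (w (Suc m)) (v - y (Suc m))) \<le> fconj g v"
    using dual_step[of m] by blast
  have "inner (z (Suc (Suc m)) - x (Suc (Suc m))) (a - x (Suc (Suc m))) / tau (Suc m)
      + inner (z (Suc m) - x (Suc m)) (x (Suc (Suc m)) - x (Suc m)) / tau m
      + 1 / (\<beta> * tau (Suc m)) * inner (y m - y (Suc m)) (b - y (Suc m))
      + inner (y (Suc m) - y m) (K (x (Suc (Suc m))) - K (x (Suc m)))
      + inner (gh (x (Suc m)) - gh (x m)) (x (Suc (Suc m)) - x (Suc m)) \<le> 0"
  proof (rule combined_variational_inequality[OF adjoint_K K_lin])
    show "fs - F2 \<ge> inner (z (Suc (Suc m)) - x (Suc (Suc m))) (a - x (Suc (Suc m))) / tau (Suc m)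
        - inner (adjoint K (y (Suc m)) + gh (x (Suc m))) (a - x (Suc (Suc m)))"
      using P2[of a] fs by simp
    show "F2 - F1 \<ge> inner (z (Suc m) - x (Suc m)) (x (Suc (Suc m)) - x (Suc m)) / tau m
        - inner (adjoint K (y m) + gh (x m)) (x (Suc (Suc m)) - x (Suc m))"
      using P1[of "x (Suc (Suc m))"] F2 by simp
    show "Gs - G1 \<ge> inner (K (x (Suc m)) - (1 / (\<beta> * tau (Suc m))) *\<^sub>R (y (Suc m) - y m))
        (b - y (Suc m))"
      using D1[of b] Gs unfolding w_eq by simp
  qed (use S1[OF F1] S2[OF G1] convex_on_gradient_inequality[OF h_conv h_grad] in auto)
  hence "inner (z (Suc (Suc m)) - x (Suc (Suc m))) (a - x (Suc (Suc m))) / tau (Suc m)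
      + inner (z (Suc m) - x (Suc m)) (x (Suc (Suc m)) - x (Suc m)) / tau m
      + inner (y m - y (Suc m)) (b - y (Suc m)) / (\<beta> * tau (Suc m))
      + inner (y (Suc m) - y m) (K (x (Suc (Suc m))) - K (x (Suc m)))
      + inner (gh (x (Suc m)) - gh (x m)) (x (Suc (Suc m)) - x (Suc m)) \<le> 0"
    by simp
  from golden_energy_inequality[OF this z_step z_step tau_K_bound tau_grad_bound
      tau_pos tau_Suc_le tau_pos beta psi less_imp_le[OF mu_pos(1)] less_imp_le[OF mu_pos(2)]]
  show ?thesis unfolding energy_def by simp
qed

lemma tau_ratios_tendsto_one:
  "(\<lambda>m. tau (Suc m) / tau m) \<longlonglongrightarrow> 1" "(\<lambda>m. tau (Suc m) / tau (Suc (Suc m))) \<longlonglongrightarrow> 1"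
proof -
  obtain tinf where tinf: "0 < tinf" "tau \<longlonglongrightarrow> tinf" by (rule tau_limit)
  have tS: "(\<lambda>m. tau (Suc m)) \<longlonglongrightarrow> tinf" using LIMSEQ_Suc[OF tinf(2)] .
  show "(\<lambda>m. tau (Suc m) / tau m) \<longlonglongrightarrow> 1"
    using tendsto_divide[OF tS tinf(2)] tinf(1) by simp
  show "(\<lambda>m. tau (Suc m) / tau (Suc (Suc m))) \<longlonglongrightarrow> 1"
    using tendsto_divide[OF tS LIMSEQ_Suc[OF tS]] tinf(1) by simp
qed

text \<open>The coefficients of \<open>energy_one_step\<close> tend to \<open>\<psi> - \<mu> - 2\<mu>'\<close>, \<open>(1 - \<mu>)/\<beta>\<close> and \<open>\<psi>\<close>,
  which are positive by the choice of the parameters.\<close>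

lemma energy_coefficients_eventually_bounded_below:
  obtains \<delta> where "0 < \<delta>"
    "eventually (\<lambda>m. \<delta> < tau (Suc m) / tau m * \<psi> - tau (Suc m) / tau (Suc (Suc m)) * \<mu> - 2 * \<mu>'
      \<and> \<delta> < (1 - tau (Suc m) / tau (Suc (Suc m)) * \<mu>) / \<beta> \<and> \<delta> < tau (Suc m) / tau m * \<psi>)
      sequentially"
proof -
  note r = tau_ratios_tendsto_one
  define l1 l2 where "l1 = \<psi> - \<mu> - 2 * \<mu>'" and "l2 = (1 - \<mu>) / \<beta>"
  define \<delta> where "\<delta> = min l1 l2 / 2"
  have "0 < l1" unfolding l1_def using mu by linarith
  moreover have "0 < l2" unfolding l2_def using mu_less_one beta by simp
  moreover have "l1 < \<psi>" unfolding l1_def using mu_pos by linarith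
  ultimately have \<delta>: "0 < \<delta>" "\<delta> < l1" "\<delta> < l2" "\<delta> < \<psi>"
    unfolding \<delta>_def by auto
  have "(\<lambda>m. tau (Suc m) / tau m * \<psi> - tau (Suc m) / tau (Suc (Suc m)) * \<mu> - 2 * \<mu>')
      \<longlonglongrightarrow> 1 * \<psi> - 1 * \<mu> - 2 * \<mu>'"
    by (intro tendsto_intros r)
  hence "eventually (\<lambda>m. \<delta> < tau (Suc m) / tau m * \<psi>
      - tau (Suc m) / tau (Suc (Suc m)) * \<mu> - 2 * \<mu>') sequentially"
    using \<delta>(2) unfolding l1_def by (intro order_tendstoD(1)) auto
  moreover have "(\<lambda>m. (1 - tau (Suc m) / tau (Suc (Suc m)) * \<mu>) / \<beta>) \<longlonglongrightarrow> (1 - 1 * \<mu>) / \<beta>"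
    using beta by (intro tendsto_intros r) simp
  hence "eventually (\<lambda>m. \<delta> < (1 - tau (Suc m) / tau (Suc (Suc m)) * \<mu>) / \<beta>) sequentially"
    using \<delta>(3) unfolding l2_def by (intro order_tendstoD(1)) auto
  moreover have "(\<lambda>m. tau (Suc m) / tau m * \<psi>) \<longlonglongrightarrow> 1 * \<psi>" by (intro tendsto_intros r)
  hence "eventually (\<lambda>m. \<delta> < tau (Suc m) / tau m * \<psi>) sequentially"
    using \<delta>(4) by (intro order_tendstoD(1)) auto
  ultimately show ?thesis using that[OF \<delta>(1)] by (simp add: eventually_conj_iff)
qed

lemma energy_descent:
  obtains \<delta> where "0 < \<delta>"
    "\<And>a b. saddle_point f h K g a b
      \<Longrightarrow> eventually (\<lambda>m. energy a b (Suc m) + \<delta> * residual m \<le> energy a b m) sequentially"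
proof -
  obtain \<delta> where \<delta>: "0 < \<delta>"
    and ev: "eventually (\<lambda>m. \<delta> < tau (Suc m) / tau m * \<psi> - tau (Suc m) / tau (Suc (Suc m)) * \<mu> - 2 * \<mu>'
      \<and> \<delta> < (1 - tau (Suc m) / tau (Suc (Suc m)) * \<mu>) / \<beta> \<and> \<delta> < tau (Suc m) / tau m * \<psi>)
      sequentially"
    by (rule energy_coefficients_eventually_bounded_below)
  have "eventually (\<lambda>m. energy a b (Suc m) + \<delta> * residual m \<le> energy a b m) sequentially"
    if sp: "saddle_point f h K g a b" for a b
    using ev
  proof eventually_elim
    case (elim m)
    have "\<delta> * residual m \<le>
        (tau (Suc m) / tau m * \<psi> - tau (Suc m) / tau (Suc (Suc m)) * \<mu> - 2 * \<mu>')
          * norm (x (Suc (Suc m)) - x (Suc m))^2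
        + (1 - tau (Suc m) / tau (Suc (Suc m)) * \<mu>) / \<beta> * norm (y (Suc m) - y m)^2
        + tau (Suc m) / tau m * \<psi> * norm (z (Suc (Suc m)) - x (Suc m))^2"
      unfolding residual_def distrib_left using elim
      by (intro add_mono mult_right_mono) auto
    thus ?case using energy_one_step[OF sp, of m] by linarith
  qed
  with \<delta> show ?thesis by (rule that)
qed

lemma energy_convergent_residual_tendsto_zero:
  assumes "saddle_point f h K g a b"
  shows "convergent (energy a b)" "residual \<longlonglongrightarrow> 0"
proof -
  obtain \<delta> where \<delta>: "0 < \<delta>"
    "eventually (\<lambda>m. energy a b (Suc m) + \<delta> * residual m \<le> energy a b m) sequentially"
    using energy_descent assms by metis
  have "0 \<le> \<delta> * residual m" for m using \<delta>(1) residual_nonneg by simp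
  from descent_sequence_convergent[OF \<delta>(2) this energy_nonneg]
  have "convergent (energy a b)" "(\<lambda>m. \<delta> * residual m) \<longlonglongrightarrow> 0" by auto
  moreover from tendsto_mult_left[OF this(2), of "1 / \<delta>"]
  have "residual \<longlonglongrightarrow> 0" using \<delta>(1) by simp
  ultimately show "convergent (energy a b)" "residual \<longlonglongrightarrow> 0" by auto
qed

lemma residual_tendsto_zeroD:
  assumes "residual \<longlonglongrightarrow> 0"
  shows "(\<lambda>m. x (Suc m) - x m) \<longlonglongrightarrow> 0" "(\<lambda>m. y (Suc m) - y m) \<longlonglongrightarrow> 0"
    "(\<lambda>m. z (Suc (Suc m)) - x (Suc m)) \<longlonglongrightarrow> 0"
proof -
  have "(\<lambda>m. x (Suc (Suc m)) - x (Suc m)) \<longlonglongrightarrow> 0"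
    by (rule tendsto_zero_if_norm_power2_le[OF _ assms]) (simp add: residual_def)
  thus "(\<lambda>m. x (Suc m) - x m) \<longlonglongrightarrow> 0" by (rule LIMSEQ_imp_Suc)
  show "(\<lambda>m. y (Suc m) - y m) \<longlonglongrightarrow> 0"
    by (rule tendsto_zero_if_norm_power2_le[OF _ assms]) (simp add: residual_def)
  show "(\<lambda>m. z (Suc (Suc m)) - x (Suc m)) \<longlonglongrightarrow> 0"
    by (rule tendsto_zero_if_norm_power2_le[OF _ assms]) (simp add: residual_def)
qed

lemma psi_ratio_ge_one: "1 \<le> \<psi> / (\<psi> - 1)"
  using psi(1) by (simp add: field_simps)

lemma norm_z_le_energy: "norm (z (Suc (Suc m)) - a)^2 \<le> energy a b m"
proof -
  have "norm (z (Suc (Suc m)) - a)^2 \<le> \<psi> / (\<psi> - 1) * norm (z (Suc (Suc m)) - a)^2"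
    using mult_right_mono[OF psi_ratio_ge_one, of "norm (z (Suc (Suc m)) - a)^2"] by simp
  moreover have "0 \<le> norm (y m - b)^2 / \<beta>" "0 \<le> \<mu>' * norm (x (Suc m) - x m)^2"
    using beta mu_pos by simp_all
  ultimately show ?thesis unfolding energy_def by linarith
qed

lemma norm_y_le_energy: "norm (y m - b)^2 \<le> \<beta> * energy a b m"
proof -
  have "norm (y m - b)^2 / \<beta> \<le> energy a b m"
    unfolding energy_def using psi(1) mu_pos by simp
  thus ?thesis using beta by (simp add: pos_divide_le_eq mult.commute)
qed

lemma iterates_bounded:
  assumes sp: "saddle_point f h K g a b"
  shows "bounded (range (\<lambda>m. (x (Suc m), y (Suc m))))"
proof -
  obtain M where M: "\<And>m. energy a b m \<le> M"
    using convergent_imp_Bseq[OF energy_convergent_residual_tendsto_zero(1)[OF sp]]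
    by (metis BseqE abs_le_D1 real_norm_def)
  obtain R where R: "\<And>m. residual m \<le> R"
    using convergent_imp_Bseq[OF convergentI[OF energy_convergent_residual_tendsto_zero(2)[OF sp]]]
    by (metis BseqE abs_le_D1 real_norm_def)
  have "bounded (range (\<lambda>m. z (Suc (Suc m)) - a))"
  proof (rule bounded_range_if_norm_power2_le)
    show "norm (z (Suc (Suc m)) - a)^2 \<le> M" for m using norm_z_le_energy M order_trans by metis
  qed
  moreover have "bounded (range (\<lambda>m. z (Suc (Suc m)) - x (Suc m)))"
  proof (rule bounded_range_if_norm_power2_le)
    fix m
    have "norm (z (Suc (Suc m)) - x (Suc m))^2 \<le> residual m" by (simp add: residual_def)
    thus "norm (z (Suc (Suc m)) - x (Suc m))^2 \<le> R" using R[of m] by linarith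
  qed
  ultimately have "bounded (range (\<lambda>m. (z (Suc (Suc m)) - a) - (z (Suc (Suc m)) - x (Suc m))))"
    by (rule bounded_minus_comp)
  hence "bounded (range (\<lambda>m. (z (Suc (Suc m)) - a) - (z (Suc (Suc m)) - x (Suc m)) + a))"
    by (rule bounded_plus_comp) auto
  hence bx: "bounded (range (\<lambda>m. x (Suc m)))" by simp
  have "bounded (range (\<lambda>m. y (Suc m) - b))"
  proof (rule bounded_range_if_norm_power2_le)
    fix m
    have "\<beta> * energy a b (Suc m) \<le> \<beta> * M" using M beta by simp
    thus "norm (y (Suc m) - b)^2 \<le> \<beta> * M" using norm_y_le_energy by (rule order_trans[rotated])
  qed
  hence "bounded (range (\<lambda>m. (y (Suc m) - b) + b))" by (rule bounded_plus_comp) auto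
  hence "bounded (range (\<lambda>m. y (Suc m)))" by simp
  with bx have "bounded (range (\<lambda>m. x (Suc m)) \<times> range (\<lambda>m. y (Suc m)))" by (rule bounded_Times)
  thus ?thesis by (rule bounded_subset) auto
qed

lemma gh_tendsto:
  assumes "X \<longlonglongrightarrow> l"
  shows "(\<lambda>k. gh (X k)) \<longlonglongrightarrow> gh l"
proof -
  have lip: "\<forall>k. norm (gh (X k) - gh l) \<le> L * norm (X k - l)" using gh_lip by blast
  have "(\<lambda>k. norm (X k - l)) \<longlonglongrightarrow> 0" using tendsto_norm_zero[OF LIM_zero[OF assms]] .
  hence "(\<lambda>k. L * norm (X k - l)) \<longlonglongrightarrow> 0" by (rule tendsto_mult_right_zero)
  with lip have "(\<lambda>k. gh (X k) - gh l) \<longlonglongrightarrow> 0" by (rule Lim_null_comparison[OF always_eventually])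
  thus ?thesis by (rule LIM_zero_cancel)
qed

lemma cluster_point_shifts:
  assumes r: "strict_mono r" and x1: "(\<lambda>k. x (Suc (r k))) \<longlonglongrightarrow> xh"
    and y1: "(\<lambda>k. y (Suc (r k))) \<longlonglongrightarrow> yh" and res: "residual \<longlonglongrightarrow> 0"
  shows "(\<lambda>k. x (Suc (r k)) - x (r k)) \<longlonglongrightarrow> 0" "(\<lambda>k. x (Suc (Suc (r k)))) \<longlonglongrightarrow> xh"
    "(\<lambda>k. y (r k)) \<longlonglongrightarrow> yh" "(\<lambda>k. z (Suc (Suc (r k)))) \<longlonglongrightarrow> xh"
proof -
  note D = residual_tendsto_zeroD[OF res]
  show "(\<lambda>k. x (Suc (r k)) - x (r k)) \<longlonglongrightarrow> 0"
    using LIMSEQ_subseq_LIMSEQ[OF D(1) r] by (simp add: comp_def)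
  have "(\<lambda>k. x (Suc (Suc (r k))) - x (Suc (r k))) \<longlonglongrightarrow> 0"
    using LIMSEQ_subseq_LIMSEQ[OF LIMSEQ_Suc[OF D(1)] r] by (simp add: comp_def)
  from tendsto_add[OF x1 this] show "(\<lambda>k. x (Suc (Suc (r k)))) \<longlonglongrightarrow> xh" by simp
  have "(\<lambda>k. y (Suc (r k)) - y (r k)) \<longlonglongrightarrow> 0"
    using LIMSEQ_subseq_LIMSEQ[OF D(2) r] by (simp add: comp_def)
  from tendsto_diff[OF y1 this] show "(\<lambda>k. y (r k)) \<longlonglongrightarrow> yh" by simp
  have "(\<lambda>k. z (Suc (Suc (r k))) - x (Suc (r k))) \<longlonglongrightarrow> 0"
    using LIMSEQ_subseq_LIMSEQ[OF D(3) r] by (simp add: comp_def)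
  from tendsto_add[OF x1 this] show "(\<lambda>k. z (Suc (Suc (r k)))) \<longlonglongrightarrow> xh" by simp
qed

lemma tau_Suc_subseq_limit:
  assumes "strict_mono r"
  obtains tinf where "0 < tinf" "(\<lambda>k. tau (Suc (r k))) \<longlonglongrightarrow> tinf"
proof -
  obtain tinf where tinf: "0 < tinf" "tau \<longlonglongrightarrow> tinf" by (rule tau_limit)
  have "(\<lambda>k. tau (Suc (r k))) \<longlonglongrightarrow> tinf"
    using LIMSEQ_subseq_LIMSEQ[OF LIMSEQ_Suc[OF tinf(2)] assms] by (simp add: comp_def)
  with tinf(1) show ?thesis by (rule that)
qed

lemma cluster_point_primal_bound:
  assumes r: "strict_mono r" and x1: "(\<lambda>k. x (Suc (r k))) \<longlonglongrightarrow> xh"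
    and y1: "(\<lambda>k. y (Suc (r k))) \<longlonglongrightarrow> yh" and x2: "(\<lambda>k. x (Suc (Suc (r k)))) \<longlonglongrightarrow> xh"
    and z2: "(\<lambda>k. z (Suc (Suc (r k)))) \<longlonglongrightarrow> xh" and fu: "f u = ereal c"
  shows "f xh \<le> ereal (c - inner (adjoint K yh + gh xh) (xh - u))"
proof -
  obtain tinf where tinf: "0 < tinf" "(\<lambda>k. tau (Suc (r k))) \<longlonglongrightarrow> tinf"
    using tau_Suc_subseq_limit[OF r] by blast
  have "bounded_linear (adjoint K)"
    using adjoint_linear[OF K_lin] by (simp add: linear_conv_bounded_linear)
  from bounded_linear.tendsto[OF this y1]
  have adj: "(\<lambda>k. adjoint K (y (Suc (r k)))) \<longlonglongrightarrow> adjoint K yh" .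
  define B where "B k = c
    - inner (z (Suc (Suc (r k))) - x (Suc (Suc (r k)))) (u - x (Suc (Suc (r k)))) / tau (Suc (r k))
    + inner (adjoint K (y (Suc (r k))) + gh (x (Suc (r k)))) (u - x (Suc (Suc (r k))))" for k
  have "B \<longlonglongrightarrow> c - inner (xh - xh) (u - xh) / tinf + inner (adjoint K yh + gh xh) (u - xh)"
    unfolding B_def using tinf(1)
    by (intro tendsto_intros z2 x2 tinf(2) adj gh_tendsto[OF x1]) simp
  moreover have "inner (adjoint K yh + gh xh) (u - xh) = - inner (adjoint K yh + gh xh) (xh - u)"
    by (simp add: inner_diff_right)
  ultimately have lim: "B \<longlonglongrightarrow> c - inner (adjoint K yh + gh xh) (xh - u)" by simp
  have "f (x (Suc (Suc (r k)))) \<le> ereal (B k)" for k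
  proof -
    obtain a where a: "f (x (Suc (Suc (r k)))) = ereal a" and vi: "\<forall>v. ereal (a
        + inner (z (Suc (Suc (r k))) - x (Suc (Suc (r k)))) (v - x (Suc (Suc (r k)))) / tau (Suc (r k))
        - inner (adjoint K (y (Suc (r k))) + gh (x (Suc (r k)))) (v - x (Suc (Suc (r k))))) \<le> f v"
      using primal_step[of "Suc (r k)"] by blast
    from vi[rule_format, of u] fu have "a \<le> B k" unfolding B_def by simp
    thus ?thesis using a by simp
  qed
  thus ?thesis by (intro lsc_efun_sequentially[OF f_pcl(3) x2 always_eventually lim]) simp
qed

lemma cluster_point_primal:
  assumes r: "strict_mono r" and x1: "(\<lambda>k. x (Suc (r k))) \<longlonglongrightarrow> xh"
    and y1: "(\<lambda>k. y (Suc (r k))) \<longlonglongrightarrow> yh" and x2: "(\<lambda>k. x (Suc (Suc (r k)))) \<longlonglongrightarrow> xh"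
    and z2: "(\<lambda>k. z (Suc (Suc (r k)))) \<longlonglongrightarrow> xh"
  obtains a where "f xh = ereal a"
    "\<And>u. ereal (a - inner yh (K u - K xh) - inner (gh xh) (u - xh)) \<le> f u"
proof -
  have nm: "\<And>v. f v \<noteq> -\<infinity>" using f_pcl(1) unfolding proper_fun_def by auto
  obtain u0 where "f u0 < \<infinity>" using f_pcl(1) unfolding proper_fun_def by auto
  then obtain c0 where "f u0 = ereal c0" using nm by (cases "f u0") auto
  from minorant_if_le_finite_values[where \<phi> = "\<lambda>u. inner (adjoint K yh + gh xh) (xh - u)",
      OF nm this cluster_point_primal_bound[OF r x1 y1 x2 z2]]
  obtain a where a: "f xh = ereal a"
    and mi: "\<And>u. ereal (a + inner (adjoint K yh + gh xh) (xh - u)) \<le> f u" by blast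
  show ?thesis
  proof (rule that[OF a])
    fix u
    have "inner (adjoint K yh + gh xh) (xh - u) = - inner yh (K u - K xh) - inner (gh xh) (u - xh)"
      by (simp add: inner_add_left inner_diff_right adjoint_K linear_diff[OF K_lin])
    hence "a + inner (adjoint K yh + gh xh) (xh - u) = a - inner yh (K u - K xh) - inner (gh xh) (u - xh)"
      by simp
    with mi[of u] show "ereal (a - inner yh (K u - K xh) - inner (gh xh) (u - xh)) \<le> f u"
      by (simp only:)
  qed
qed

lemma cluster_point_dual:
  assumes r: "strict_mono r" and x1: "(\<lambda>k. x (Suc (r k))) \<longlonglongrightarrow> xh"
    and y1: "(\<lambda>k. y (Suc (r k))) \<longlonglongrightarrow> yh" and y0: "(\<lambda>k. y (r k)) \<longlonglongrightarrow> yh"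
  obtains c where "fconj g yh = ereal c" "\<And>v. ereal (c + inner (K xh) (v - yh)) \<le> fconj g v"
proof -
  obtain tinf where tinf: "0 < tinf" "(\<lambda>k. tau (Suc (r k))) \<longlonglongrightarrow> tinf"
    using tau_Suc_subseq_limit[OF r] by blast
  have "(\<lambda>k. K (x (Suc (r k))) - (1 / (\<beta> * tau (Suc (r k)))) *\<^sub>R (y (Suc (r k)) - y (r k)))
      \<longlonglongrightarrow> K xh - (1 / (\<beta> * tinf)) *\<^sub>R (yh - yh)"
    using K_lin tinf beta
    by (intro tendsto_intros y1 y0 bounded_linear.tendsto[OF _ x1]) (auto simp: linear_conv_bounded_linear)
  hence wr: "(\<lambda>k. w (Suc (r k))) \<longlonglongrightarrow> K xh" unfolding w_eq by simp
  have nm: "\<forall>v. g v \<noteq> -\<infinity>" using g_pcl(1) unfolding proper_fun_def by auto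
  have bound: "fconj g yh \<le> ereal (c - inner (K xh) (v - yh))" if fv: "fconj g v = ereal c" for v c
  proof (rule fconj_lsc_sequentially[OF nm y1 always_eventually])
    show "\<forall>k. fconj g (y (Suc (r k))) \<le> ereal (c - inner (w (Suc (r k))) (v - y (Suc (r k))))"
    proof
      fix k
      obtain d where d: "fconj g (y (Suc (r k))) = ereal d"
        and "\<forall>v. ereal (d + inner (w (Suc (r k))) (v - y (Suc (r k)))) \<le> fconj g v"
        using dual_step[of "r k"] by blast
      from this(2)[rule_format, of v] fv have "d \<le> c - inner (w (Suc (r k))) (v - y (Suc (r k)))"
        by simp
      thus "fconj g (y (Suc (r k))) \<le> ereal (c - inner (w (Suc (r k))) (v - y (Suc (r k))))"
        using d by simp
    qed
    show "(\<lambda>k. c - inner (w (Suc (r k))) (v - y (Suc (r k)))) \<longlonglongrightarrow> c - inner (K xh) (v - yh)"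
      by (intro tendsto_intros wr y1)
  qed
  obtain c1 where "fconj g (y (Suc 0)) = ereal c1" using dual_step[of 0] by blast
  from minorant_if_le_finite_values[where \<phi> = "\<lambda>v. inner (K xh) (v - yh)",
      OF fconj_g_neq_MInf this bound] that
  show ?thesis by blast
qed

lemma cluster_point_saddle:
  assumes r: "strict_mono r" and x1: "(\<lambda>k. x (Suc (r k))) \<longlonglongrightarrow> xh"
    and y1: "(\<lambda>k. y (Suc (r k))) \<longlonglongrightarrow> yh" and res: "residual \<longlonglongrightarrow> 0"
  shows "saddle_point f h K g xh yh"
proof -
  note shifts = cluster_point_shifts[OF r x1 y1 res]
  obtain a where a: "f xh = ereal a"
    and sf: "\<And>u. ereal (a - inner yh (K u - K xh) - inner (gh xh) (u - xh)) \<le> f u"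
    using cluster_point_primal[OF r x1 y1 shifts(2,4)] by blast
  obtain c where c: "fconj g yh = ereal c" and sg: "\<And>v. ereal (c + inner (K xh) (v - yh)) \<le> fconj g v"
    using cluster_point_dual[OF r x1 y1 shifts(3)] by blast
  show ?thesis
    using saddle_pointI_subgradient[OF a c sf sg convex_on_gradient_inequality[OF h_conv h_grad]] .
qed

lemma convergence_of_energy_tendsto_zero:
  assumes E: "energy a b \<longlonglongrightarrow> 0" and res: "residual \<longlonglongrightarrow> 0"
  shows "x \<longlonglongrightarrow> a" "y \<longlonglongrightarrow> b"
proof -
  have "(\<lambda>m. z (Suc (Suc m)) - a) \<longlonglongrightarrow> 0"
    by (rule tendsto_zero_if_norm_power2_le[OF norm_z_le_energy E])
  hence "(\<lambda>m. (z (Suc (Suc m)) - a) - (z (Suc (Suc m)) - x (Suc m))) \<longlonglongrightarrow> 0 - 0"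
    by (intro tendsto_diff residual_tendsto_zeroD(3)[OF res])
  hence "(\<lambda>m. x (Suc m) - a) \<longlonglongrightarrow> 0" by simp
  hence "(\<lambda>m. x (Suc m)) \<longlonglongrightarrow> a" by (rule LIM_zero_cancel)
  thus "x \<longlonglongrightarrow> a" by (rule LIMSEQ_imp_Suc)
  have "(\<lambda>m. \<beta> * energy a b m) \<longlonglongrightarrow> 0" by (rule tendsto_mult_right_zero[OF E])
  hence "(\<lambda>m. y m - b) \<longlonglongrightarrow> 0" by (rule tendsto_zero_if_norm_power2_le[OF norm_y_le_energy])
  thus "y \<longlonglongrightarrow> b" by (rule LIM_zero_cancel)
qed

lemma iterates_converge:
  assumes "\<exists>a b. saddle_point f h K g a b"
  shows "\<exists>xh yh. saddle_point f h K g xh yh \<and> ((\<lambda>n. (x n, y n)) \<longlonglongrightarrow> (xh, yh))"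
proof -
  obtain a b where sp: "saddle_point f h K g a b" using assms by blast
  have res: "residual \<longlonglongrightarrow> 0" by (rule energy_convergent_residual_tendsto_zero(2)[OF sp])
  obtain r p where r: "strict_mono r" and lim: "((\<lambda>m. (x (Suc m), y (Suc m))) \<circ> r) \<longlonglongrightarrow> p"
    using bounded_imp_convergent_subsequence[OF iterates_bounded[OF sp]] by blast
  define xh yh where "xh = fst p" and "yh = snd p"
  have x1: "(\<lambda>k. x (Suc (r k))) \<longlonglongrightarrow> xh"
    using tendsto_fst[OF lim] unfolding xh_def by (simp add: comp_def)
  have y1: "(\<lambda>k. y (Suc (r k))) \<longlonglongrightarrow> yh"
    using tendsto_snd[OF lim] unfolding yh_def by (simp add: comp_def)
  have sp': "saddle_point f h K g xh yh" by (rule cluster_point_saddle[OF r x1 y1 res])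
  note shifts = cluster_point_shifts[OF r x1 y1 res]
  have "(\<lambda>k. norm (z (Suc (Suc (r k))) - xh)^2) \<longlonglongrightarrow> 0"
    "(\<lambda>k. norm (y (r k) - yh)^2) \<longlonglongrightarrow> 0" "(\<lambda>k. norm (x (Suc (r k)) - x (r k))^2) \<longlonglongrightarrow> 0"
    using tendsto_power[OF tendsto_norm_zero[OF LIM_zero[OF shifts(4)]], of 2]
      tendsto_power[OF tendsto_norm_zero[OF LIM_zero[OF shifts(3)]], of 2]
      tendsto_power[OF tendsto_norm_zero[OF shifts(1)], of 2] by simp_all
  hence "(\<lambda>k. energy xh yh (r k)) \<longlonglongrightarrow> \<psi> / (\<psi> - 1) * 0 + 0 + \<mu>' * 0"
    unfolding energy_def by (intro tendsto_add tendsto_mult_left tendsto_divide_zero)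
  hence E0r: "(\<lambda>k. energy xh yh (r k)) \<longlonglongrightarrow> 0" by simp
  obtain l where El: "energy xh yh \<longlonglongrightarrow> l"
    using energy_convergent_residual_tendsto_zero(1)[OF sp'] unfolding convergent_def by blast
  have "(\<lambda>k. energy xh yh (r k)) \<longlonglongrightarrow> l"
    using LIMSEQ_subseq_LIMSEQ[OF El r] by (simp add: comp_def)
  from LIMSEQ_unique[OF this E0r] El have "energy xh yh \<longlonglongrightarrow> 0" by simp
  from convergence_of_energy_tendsto_zero[OF this res]
  have "(\<lambda>n. (x n, y n)) \<longlonglongrightarrow> (xh, yh)" by (rule tendsto_Pair)
  with sp' show ?thesis by (intro exI[where x = xh] exI[where x = yh] conjI)
qed

end

theorem theorem3p1:
  fixes f :: "'a::euclidean_space \<Rightarrow> ereal" and g :: "'b::euclidean_space \<Rightarrow> ereal"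
    and K :: "'a \<Rightarrow> 'b" and h :: "'a \<Rightarrow> real" and gh :: "'a \<Rightarrow> 'a" and L :: real
    and x z :: "nat \<Rightarrow> 'a" and y w :: "nat \<Rightarrow> 'b" and tau :: "nat \<Rightarrow> real"
    and \<beta> \<psi> \<mu> \<mu>' :: real
  assumes f_pcl: "proper_fun f" "convex_efun f" "lsc_efun f"
    and g_pcl: "proper_fun g" "convex_efun g" "lsc_efun g"
    and K_lin: "linear K"
    and h_conv: "convex_on UNIV h"
    and h_grad: "\<And>u. (h has_derivative (\<lambda>v. gh u \<bullet> v)) (at u)"
    and gh_lip: "\<And>u v. norm (gh u - gh v) \<le> L * norm (u - v)"
    and A1_sol: "\<exists>xs ys. saddle_point f h K g xs ys"
    and A1_ri: "0 \<in> rel_interior {K u - v | u v. u \<in> edom f \<and> v \<in> edom g}"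
    and beta: "\<beta> > 0"
    and psi: "1 < \<psi>" "\<psi> \<le> golden"
    and mu: "0 < 2 * \<mu>'" "2 * \<mu>' < \<mu>" "\<mu> < \<psi> / 2"
    and tau0: "tau 0 > 0"
    and z0: "z 0 = x 0"
    and z_step: "\<And>n. z (Suc n) = ((\<psi> - 1) / \<psi>) *\<^sub>R x n + (1 / \<psi>) *\<^sub>R z n"
    and x_step: "\<And>n. x (Suc n) = prox (tau n) f
                   (z (Suc n) - tau n *\<^sub>R adjoint K (y n) - tau n *\<^sub>R gh (x n))"
    and tau_step: "\<And>n. tau (Suc n) = min (tau n)
                   (min (if K (x (Suc n)) - K (x n) = 0 then tau n
                         else \<mu> * norm (x (Suc n) - x n) / (sqrt \<beta> * norm (K (x (Suc n)) - K (x n))))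
                        (if gh (x (Suc n)) - gh (x n) = 0 then tau n
                         else \<mu>' * norm (x (Suc n) - x n) / norm (gh (x (Suc n)) - gh (x n))))"
    and w_step: "\<And>n. w (Suc n) = prox (1 / (\<beta> * tau (Suc n))) g
                   ((1 / (\<beta> * tau (Suc n))) *\<^sub>R y n + K (x (Suc n)))"
    and y_step: "\<And>n. y (Suc n) = y n + (\<beta> * tau (Suc n)) *\<^sub>R (K (x (Suc n)) - w (Suc n))"
  shows "\<exists>xh yh. saddle_point f h K g xh yh \<and> ((\<lambda>n. (x n, y n)) \<longlonglongrightarrow> (xh, yh))"
proof -
  have psi_sq: "\<psi>^2 \<le> \<psi> + 1" using le_golden_imp_square_le psi by simp
  interpret pgrpda f g K h gh L x z y w tau \<beta> \<psi> \<mu> \<mu>'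
    by (intro pgrpda.intro) (fact assms psi_sq)+
  show ?thesis using iterates_converge[OF A1_sol] .
qed

end
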